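(* Let $1\le k<n<m<2n$. Under the shuffle representation, the image of $e[k,m]$ is $$e[k,m]=\alpha_k^m\cdot\big\{(e(m,k))+p_{n-1,n}\,(e'(m,k))\big\},\qquad \alpha_k^m=\epsilon_k^m(q-1)^{m-k-1}\prod_{k\le i<j\le m,\ i,j\ne n-1}p_{ij},$$ where $\epsilon_k^m=q^{-1}$ if $m=\phi(k)$ and $\epsilon_k^m=1$ otherwise.
   Context: Let $\mathbf{k}$ be a field, $G$ an abelian group, $n\ge3$, $X=\{x_1,\dots,x_n\}$, $g_i\in G$, characters $\chi^i:G\to\mathbf{k}^*$, $p_{ij}=\chi^i(g_j)$; for words $u,v$, $p(u,v)=\chi^u(g_v)$ where $g_u,\chi^u$ replace each $x_i$ by $g_i$, resp. $\chi^i$ (bimultiplicative). $G\langle X\rangle$: skew group algebra with $x_ig=\chi^i(g)gx_i$; skew bracket $[u,v]=uv-p(u,v)vu$. Fix $q\in\mathbf{k}^*$, $q\ne-1$; assume $p_{ii}=q$ ($1\le i\le n$), $p_{i,i-1}p_{i-1,i}=q^{-1}$ ($1<i<n$), $p_{n-2,n}p_{n,n-2}=q^{-1}$, $p_{n-1,n}p_{n,n-1}=1$, $p_{ij}p_{ji}=1$ for all other $i<j$ with $j>i+1$. $U_q^+(\mathfrak{so}_{2n})$ is the quotient of $G\langle X\rangle$ by the ideal generated by $[x_i,[x_i,x_{i+1}]]$, $[[x_i,x_{i+1}],x_{i+1}]$ ($1\le i\le n-2$), $[x_{n-2},[x_{n-2},x_n]]$, $[[x_{n-2},x_n],x_n]$,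 $[x_i,x_j]$ ($1\le i<j\le n-1$, $j>i+1$), $[x_i,x_n]$ ($i\le n-3$), $[x_{n-1},x_n]$. For $n<i<2n$, $x_i:=x_{2n-i}$, and $p_{ij}$ with such indices means $\chi$ of the corresponding generators; $\phi(i)=2n-i$. Words: $e(k,m)$ is $x_k\cdots x_m$ if $m<n$ or $k>n$; $x_k\cdots x_{n-2}x_nx_{n+1}\cdots x_m$ if $k<n-1<m$; $x_nx_{n+1}\cdots x_m$ if $k=n-1<m$; $x_nx_{n+2}\cdots x_m$ if $k=n$. $e'(k,m)$ is obtained from $e(k,m)$ by replacing the subword $x_nx_{n+1}$ (if present) by $x_{n-1}x_n$; $e(m,k)$, $e'(m,k)$ denote the reversed words. $e[k,m]$ is the bracketing of the letters $y_1\cdots y_r$ of $e(k,m)$ (a single letter unbracketed): $[[\dots[y_1,y_2],\dots],y_r]$ if $m<\phi(k)$; $[y_1,[y_2,[\dots,[y_{r-1},y_r]\dots]]]$ if $m>\phi(k)$; $e[k,m]=e[k,m-1]x_m-q^{-1}p(e(k,m-1),x_m)x_me[k,m-1]$ if $m=\phi(k)$. Shuffle representation: $\mathrm{Sh}$ has basis the comonomials $(z_1\cdots z_r)$, $z_i\in X$, with product $(a_1\cdots a_r)(b_1\cdots b_s)=\sum_w c_w(w)$ over all shuffles $w$, $c_w=\prod p(b,a)^{-1}$ over pairs of a letter $a$ of the first and $b$ of the second factor with $b$ preceding $a$ in $w$. The map $x_i\mapsto(x_i)$ extends to an algebra homomorphism from the subalgebra of $U_q^+(\mathfrak{so}_{2n})$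 generated by $x_1,\dots,x_n$ into $\mathrm{Sh}$; the claim concerns images under it. *)

theory Defs
  imports Main
begin

text \<open>Shuffle algebra Sh: an element is a coefficient function on words
(lists of generator indices 1..n); the comonomial (z1...zr) is the indicator
of the word.  P i j stands for p_ij = chi^i(g_j).\<close>

type_synonym 'k sh = "nat list \<Rightarrow> 'k"

definition comon :: "nat list \<Rightarrow> 'k::field sh" where
  "comon u = (\<lambda>v. if v = u then 1 else 0)"

definition sh_scale :: "'k::field \<Rightarrow> 'k sh \<Rightarrow> 'k sh" where
  "sh_scale c f = (\<lambda>w. c * f w)"

definition sh_add :: "'k::field sh \<Rightarrow> 'k sh \<Rightarrow> 'k sh" where
  "sh_add f g = (\<lambda>w. f w + g w)"

text \<open>Shuffle coefficient: S is the set of positions of w occupied by the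
first factor; c = product of p(b,a)^{-1} over a in S, b not in S, b before a.\<close>
definition sh_coef :: "(nat \<Rightarrow> nat \<Rightarrow> 'k::field) \<Rightarrow> nat list \<Rightarrow> nat set \<Rightarrow> 'k" where
  "sh_coef P w S = (\<Prod>a\<in>S. \<Prod>b\<in>{0..<length w} - S. if b < a then inverse (P (w!b) (w!a)) else 1)"

definition sh_mult :: "(nat \<Rightarrow> nat \<Rightarrow> 'k::field) \<Rightarrow> 'k sh \<Rightarrow> 'k sh \<Rightarrow> 'k sh" where
  "sh_mult P f g = (\<lambda>w. \<Sum>S\<in>Pow {0..<length w}.
       f (nths w S) * g (nths w ({0..<length w} - S)) * sh_coef P w S)"

definition pw :: "(nat \<Rightarrow> nat \<Rightarrow> 'k::field) \<Rightarrow> nat list \<Rightarrow> nat list \<Rightarrow> 'k" where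
  "pw P u v = (\<Prod>i<length u. \<Prod>j<length v. P (u!i) (v!j))"

text \<open>Skew bracket [A,B] = AB - p(u,v) BA of homogeneous elements of degrees u, v.\<close>
definition sh_br :: "(nat \<Rightarrow> nat \<Rightarrow> 'k::field) \<Rightarrow> nat list \<Rightarrow> nat list \<Rightarrow> 'k sh \<Rightarrow> 'k sh \<Rightarrow> 'k sh" where
  "sh_br P u v A B = sh_add (sh_mult P A B) (sh_scale (- pw P u v) (sh_mult P B A))"

fun rightb :: "(nat \<Rightarrow> nat \<Rightarrow> 'k::field) \<Rightarrow> nat list \<Rightarrow> 'k sh" where
  "rightb P [] = (\<lambda>_. 0)"
| "rightb P [y] = comon [y]"
| "rightb P (y # ys) = sh_br P [y] ys (comon [y]) (rightb P ys)"

fun leftb_rev :: "(nat \<Rightarrow> nat \<Rightarrow> 'k::field) \<Rightarrow> nat list \<Rightarrow> 'k sh" where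
  "leftb_rev P [] = (\<lambda>_. 0)"
| "leftb_rev P [y] = comon [y]"
| "leftb_rev P (y # ys) = sh_br P (rev ys) [y] (leftb_rev P ys) (comon [y])"

definition leftb :: "(nat \<Rightarrow> nat \<Rightarrow> 'k::field) \<Rightarrow> nat list \<Rightarrow> 'k sh" where
  "leftb P ys = leftb_rev P (rev ys)"

text \<open>Index conventions: x_i := x_{2n-i} for n < i < 2n; phi(i) = 2n - i.\<close>
definition ltr :: "nat \<Rightarrow> nat \<Rightarrow> nat" where
  "ltr n i = (if i \<le> n then i else 2*n - i)"

definition phi :: "nat \<Rightarrow> nat \<Rightarrow> nat" where
  "phi n i = 2*n - i"

definition elab :: "nat \<Rightarrow> nat \<Rightarrow> nat \<Rightarrow> nat list" where
  "elab n k m =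
    (if m < n \<or> k > n then [k..<m+1]
     else if k < n - 1 \<and> n - 1 < m then [k..<n-1] @ [n] @ [n+1..<m+1]
     else if k = n - 1 \<and> n - 1 < m then [n] @ [n+1..<m+1]
     else if k = n then n # [n+2..<m+1]
     else [])"

fun repl :: "nat \<Rightarrow> nat list \<Rightarrow> nat list" where
  "repl n (a # b # xs) = (if a = n \<and> b = n + 1 then (n - 1) # n # xs else a # repl n (b # xs))"
| "repl n xs = xs"

definition ew :: "nat \<Rightarrow> nat \<Rightarrow> nat \<Rightarrow> nat list" where
  "ew n k m = map (ltr n) (elab n k m)"

definition ew' :: "nat \<Rightarrow> nat \<Rightarrow> nat \<Rightarrow> nat list" where
  "ew' n k m = map (ltr n) (repl n (elab n k m))"

text \<open>The bracketed element e[k,m], evaluated in Sh (image under x_i \<mapsto> (x_i)).\<close>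
definition ebr :: "nat \<Rightarrow> 'k::field \<Rightarrow> (nat \<Rightarrow> nat \<Rightarrow> 'k) \<Rightarrow> nat \<Rightarrow> nat \<Rightarrow> 'k sh" where
  "ebr n q P k m =
    (if m < phi n k then leftb P (ew n k m)
     else if m > phi n k then rightb P (ew n k m)
     else (let A = leftb P (ew n k (m - 1)); xm = [ltr n m] in
           sh_add (sh_mult P A (comon xm))
                  (sh_scale (- inverse q * pw P (ew n k (m - 1)) xm) (sh_mult P (comon xm) A))))"

definition so_params :: "nat \<Rightarrow> 'k::field \<Rightarrow> (nat \<Rightarrow> nat \<Rightarrow> 'k) \<Rightarrow> bool" where
  "so_params n q P \<longleftrightarrow> 3 \<le> n \<and> q \<noteq> 0 \<and> q \<noteq> -1 \<and>
     (\<forall>i\<in>{1..n}. \<forall>j\<in>{1..n}. P i j \<noteq> 0) \<and>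
     (\<forall>i\<in>{1..n}. P i i = q) \<and>
     (\<forall>i. 1 < i \<and> i < n \<longrightarrow> P i (i - 1) * P (i - 1) i = inverse q) \<and>
     P (n - 2) n * P n (n - 2) = inverse q \<and>
     P (n - 1) n * P n (n - 1) = 1 \<and>
     (\<forall>i j. 1 \<le> i \<and> i < j \<and> j \<le> n \<and> j > i + 1 \<and> (i, j) \<noteq> (n - 2, n)
            \<longrightarrow> P i j * P j i = 1)"

end

theory Submission
  imports Defs
begin

text \<open>Multiplying a comonomial by a single letter \<open>x\<close> in the shuffle algebra inserts \<open>x\<close> at every
  position, so the bracket of a comonomial with \<open>x\<close> is a sum over insertion positions whose
  coefficients are products of \<open>p\<^sub>i\<^sub>j\<close>. For the words \<open>e(k,m)\<close> of \<open>U\<^sub>q\<^sup>+(\<open>so\<close>\<^sub>2\<^sub>n)\<close> almost all of these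
  coefficients vanish: letters not adjacent to \<open>x\<close> in the Dynkin diagram do not contribute, and the two
  insertions next to an occurrence of \<open>x\<close> cancel. Building \<open>e[k,m]\<close> one letter at a time (from the
  right end when \<open>m < \<phi>(k)\<close>, from the left end when \<open>m > \<phi>(k)\<close>), each partial bracket therefore stays a
  multiple of \<open>(e(m,k)) + p\<^sub>n\<^sub>-\<^sub>1\<^sub>,\<^sub>n (e'(m,k))\<close> (the second comonomial appears at the step where
  the disconnected letters \<open>n - 1\<close> and \<open>n\<close> meet, since both of their orders survive), and every new letter \<open>x\<close> multiplies the scalar by
  \<open>(q - 1)\<close> times the braiding of \<open>x\<close> with the word built so far; these factors multiply up to
  \<open>\<alpha>\<^sub>k\<^sup>m\<close>. The bracket for \<open>m = \<phi>(k)\<close> is handled the same way with the extra factor \<open>q\<^sup>-\<^sup>1\<close>.\<close>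

lemma nths_cong_index:
  "(\<And>i. i < length xs \<Longrightarrow> i \<in> A \<longleftrightarrow> i \<in> B) \<Longrightarrow> nths xs A = nths xs B"
proof (induction xs arbitrary: A B)
  case Nil then show ?case by simp
next
  case (Cons a xs)
  have "nths xs {j. Suc j \<in> A} = nths xs {j. Suc j \<in> B}"
    using Cons.prems by (intro Cons.IH) auto
  moreover have "0 \<in> A \<longleftrightarrow> 0 \<in> B" using Cons.prems by auto
  ultimately show ?case by (simp add: nths_Cons)
qed

lemma nths_Compl_singleton: "t < length w \<Longrightarrow> nths w (- {t}) = take t w @ drop (Suc t) w"
proof (induction w arbitrary: t)
  case (Cons a w)
  then show ?case
  proof (cases t)
    case 0
    then have "{j. Suc j \<in> - {t}} = UNIV" by auto
    then show ?thesis using 0 by (simp add: nths_Cons nths_all)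
  next
    case (Suc t')
    then have "{j. Suc j \<in> - {t}} = - {t'}" by auto
    then show ?thesis using Suc Cons by (simp add: nths_Cons)
  qed
qed simp

lemma nths_atLeast0_lessThan_minus_singleton:
  "t < length w \<Longrightarrow> nths w ({0..<length w} - {t}) = take t w @ drop (Suc t) w"
  by (subst nths_cong_index[of w _ "- {t}"]) (auto simp: nths_Compl_singleton)

lemma nths_singleton_index: "t < length w \<Longrightarrow> nths w {t} = [w!t]"
proof (induction w arbitrary: t)
  case (Cons a w)
  then show ?case
  proof (cases t)
    case 0
    then have "{j. Suc j \<in> {t}} = {}" by auto
    then show ?thesis using 0 by (simp add: nths_Cons)
  next
    case (Suc t')
    then have "{j. Suc j \<in> {t}} = {t'}" by auto
    then show ?thesis using Suc Cons by (simp add: nths_Cons)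
  qed
qed simp

lemma length_nths_subset: "S \<subseteq> {0..<length w} \<Longrightarrow> length (nths w S) = card S"
proof -
  assume "S \<subseteq> {0..<length w}"
  then have "{i. i < length w \<and> i \<in> S} = S" by auto
  then show ?thesis by (simp add: length_nths)
qed

lemma prod_list_map_drop: "prod_list (map f (drop s w)) = (\<Prod>i\<in>{s..<length w}. f (w!i))"
proof (induction w arbitrary: s)
  case (Cons a w)
  show ?case
  proof (cases s)
    case 0
    have "(\<Prod>i\<in>{0..<Suc (length w)}. f ((a#w)!i)) = f a * (\<Prod>i\<in>{0..<length w}. f (w!i))"
      by (subst prod.atLeast0_lessThan_Suc_shift) simp
    then show ?thesis using 0 Cons.IH[of 0] by simp
  next
    case (Suc s')
    have "(\<Prod>i\<in>{Suc s'..<Suc (length w)}. f ((a#w)!i)) = (\<Prod>i\<in>{s'..<length w}. f (w!i))"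
      by (subst prod.shift_bounds_Suc_ivl) simp
    then show ?thesis using Suc Cons.IH[of s'] by simp
  qed
qed simp

lemma prod_list_map_take: "prod_list (map f (take s w)) = (\<Prod>i\<in>{0..<min s (length w)}. f (w!i))"
proof (induction w arbitrary: s)
  case (Cons a w)
  show ?case
  proof (cases s)
    case (Suc s')
    have "(\<Prod>i\<in>{0..<Suc (min s' (length w))}. f ((a#w)!i)) = f a * (\<Prod>i\<in>{0..<min s' (length w)}. f (w!i))"
      by (subst prod.atLeast0_lessThan_Suc_shift) simp
    then show ?thesis using Suc Cons.IH[of s'] by simp
  qed simp
qed simp

lemma prod_list_map_inverse:
  "prod_list (map (\<lambda>y. inverse (f y)) s) = inverse (prod_list (map f s) :: 'k::field)"
  by (induction s) auto

lemma rev_snoc: "rev (xs @ [x]) = x # rev xs"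
  by simp

lemma upt_split_at: "a \<le> b \<Longrightarrow> b \<le> c \<Longrightarrow> [a..<c] = [a..<b] @ [b..<c]"
  using upt_add_eq_append[of a b "c - b"] by simp

lemma sum_Pow_singletons:
  assumes "finite U" and "\<And>S. S \<subseteq> U \<Longrightarrow> h S \<noteq> 0 \<Longrightarrow> card S = 1"
  shows "(\<Sum>S\<in>Pow U. h S) = (\<Sum>t\<in>U. h {t})"
proof -
  have "(\<Sum>t\<in>U. h {t}) = (\<Sum>S\<in>(\<lambda>t. {t}) ` U. h S)"
    by (simp add: sum.reindex inj_on_def)
  also have "\<dots> = (\<Sum>S\<in>Pow U. h S)"
  proof (rule sum.mono_neutral_left)
    show "\<forall>S\<in>Pow U - (\<lambda>t. {t}) ` U. h S = 0"
      using assms(2) by (force simp: card_Suc_eq)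
  qed (use assms in auto)
  finally show ?thesis by simp
qed

lemma sum_Pow_cosingletons:
  assumes "finite U" and "\<And>S. S \<subseteq> U \<Longrightarrow> h S \<noteq> 0 \<Longrightarrow> card (U - S) = 1"
  shows "(\<Sum>S\<in>Pow U. h S) = (\<Sum>t\<in>U. h (U - {t}))"
proof -
  have "bij_betw (\<lambda>S. U - S) (Pow U) (Pow U)"
    by (rule bij_betw_byWitness[where f' = "\<lambda>S. U - S"]) auto
  then have "(\<Sum>S\<in>Pow U. h S) = (\<Sum>S\<in>Pow U. h (U - S))"
    by (rule sum.reindex_bij_betw[symmetric])
  also have "\<dots> = (\<Sum>t\<in>U. h (U - {t}))"
  proof (rule sum_Pow_singletons)
    fix S assume "S \<subseteq> U" "h (U - S) \<noteq> 0"
    then show "card S = 1" using assms(2)[of "U - S"] by (auto simp: double_diff)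
  qed (use assms in simp)
  finally show ?thesis .
qed

text \<open>In the notation \<open>p(u,v)\<close> of the paper, \<open>p_left P x s = p(s,x)\<close> and \<open>p_right P x s = p(x,s)\<close>.\<close>

definition p_left :: "(nat \<Rightarrow> nat \<Rightarrow> 'k::field) \<Rightarrow> nat \<Rightarrow> nat list \<Rightarrow> 'k" where
  "p_left P x s = prod_list (map (\<lambda>y. P y x) s)"

definition p_right :: "(nat \<Rightarrow> nat \<Rightarrow> 'k::field) \<Rightarrow> nat \<Rightarrow> nat list \<Rightarrow> 'k" where
  "p_right P x s = prod_list (map (\<lambda>y. P x y) s)"

definition p_both :: "(nat \<Rightarrow> nat \<Rightarrow> 'k::field) \<Rightarrow> nat \<Rightarrow> nat list \<Rightarrow> 'k" where
  "p_both P x s = prod_list (map (\<lambda>y. P x y * P y x) s)"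

definition disconnected :: "(nat \<Rightarrow> nat \<Rightarrow> 'k::field) \<Rightarrow> nat \<Rightarrow> nat list \<Rightarrow> bool" where
  "disconnected P x s \<longleftrightarrow> (\<forall>y\<in>set s. P x y * P y x = 1)"

lemma p_left_simps[simp]:
  "p_left P x [] = 1" "p_left P x (y # s) = P y x * p_left P x s"
  "p_left P x (s @ t) = p_left P x s * p_left P x t" "p_left P x (rev s) = p_left P x s"
  by (auto simp: p_left_def rev_map[symmetric])

lemma p_right_simps[simp]:
  "p_right P x [] = 1" "p_right P x (y # s) = P x y * p_right P x s"
  "p_right P x (s @ t) = p_right P x s * p_right P x t" "p_right P x (rev s) = p_right P x s"
  by (auto simp: p_right_def rev_map[symmetric])

lemma p_both_simps[simp]:
  "p_both P x [] = 1" "p_both P x (y # s) = P x y * P y x * p_both P x s"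
  "p_both P x (s @ t) = p_both P x s * p_both P x t"
  by (auto simp: p_both_def)

lemma p_both_eq: "p_both P x s = p_right P x s * p_left P x s"
  by (induction s) auto

lemma disconnected_simps[simp]:
  "disconnected P x []" "disconnected P x (y # s) \<longleftrightarrow> P x y * P y x = 1 \<and> disconnected P x s"
  "disconnected P x (s @ t) \<longleftrightarrow> disconnected P x s \<and> disconnected P x t"
  "disconnected P x (rev s) \<longleftrightarrow> disconnected P x s"
  by (auto simp: disconnected_def)

lemma disconnected_p_both: "disconnected P x s \<Longrightarrow> p_both P x s = 1"
  by (induction s) auto

lemma disconnected_drop: "disconnected P x s \<Longrightarrow> disconnected P x (drop i s)"
  by (auto simp: disconnected_def dest: in_set_dropD)

lemma disconnected_take: "disconnected P x s \<Longrightarrow> disconnected P x (take i s)"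
  by (auto simp: disconnected_def dest: in_set_takeD)

lemma pw_letter_right: "pw P u [x] = p_left P x u"
  by (simp add: pw_def p_left_def prod_list_map_drop[of _ 0, simplified] atLeast0LessThan)

lemma pw_letter_left: "pw P [x] u = p_right P x u"
  by (simp add: pw_def p_right_def prod_list_map_drop[of _ 0, simplified] atLeast0LessThan)

fun pairs_p :: "(nat \<Rightarrow> nat \<Rightarrow> 'k::field) \<Rightarrow> nat list \<Rightarrow> 'k" where
  "pairs_p P [] = 1"
| "pairs_p P (y # w) = p_right P y w * pairs_p P w"

lemma pairs_p_snoc: "pairs_p P (w @ [x]) = pairs_p P w * p_left P x w"
  by (induction w) (auto simp: algebra_simps)

lemma prod_pairs_eq_pairs_p:
  "sorted_wrt (<) (l :: nat list) \<Longrightarrow>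
   (\<Prod>(i, j)\<in>{(i, j). i \<in> set l \<and> j \<in> set l \<and> i < j}. P (g i) (g j)) = pairs_p P (map g l)"
proof (induction l)
  case (Cons y l)
  define B where "B = {(i, j). i \<in> set l \<and> j \<in> set l \<and> i < j}"
  have lt: "\<forall>z\<in>set l. y < z" and sorted: "sorted_wrt (<) l" and "distinct l"
    using Cons.prems by (auto simp: strict_sorted_iff)
  then have split: "{(i, j). i \<in> set (y # l) \<and> j \<in> set (y # l) \<and> i < j} = Pair y ` set l \<union> B"
    by (auto simp: B_def)
  have "finite B" by (rule finite_subset[of _ "set l \<times> set l"]) (auto simp: B_def)
  moreover have "Pair y ` set l \<inter> B = {}" using lt by (auto simp: B_def)
  ultimately have "(\<Prod>(i, j)\<in>{(i, j). i \<in> set (y # l) \<and> j \<in> set (y # l) \<and> i < j}. P (g i) (g j))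
      = (\<Prod>z\<in>set l. P (g y) (g z)) * (\<Prod>(i, j)\<in>B. P (g i) (g j))"
    unfolding split by (subst prod.union_disjoint) (auto simp: prod.reindex inj_on_def)
  also have "(\<Prod>z\<in>set l. P (g y) (g z)) = p_right P (g y) (map g l)"
    using \<open>distinct l\<close> by (simp add: prod.distinct_set_conv_list p_right_def comp_def)
  finally show ?case using Cons.IH[OF sorted] by (simp add: B_def)
qed simp

section \<open>Shuffle product with a single letter\<close>

definition insert_at :: "nat \<Rightarrow> nat \<Rightarrow> nat list \<Rightarrow> nat list" where
  "insert_at t x a = take t a @ x # drop t a"

lemma insert_at_eq_iff:
  assumes "t < length w"
  shows "insert_at t x a = w \<longleftrightarrow> w!t = x \<and> take t w @ drop (Suc t) w = a"
proof
  assume h: "insert_at t x a = w"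
  then have "t \<le> length a" using assms by (auto simp: insert_at_def)
  then show "w!t = x \<and> take t w @ drop (Suc t) w = a"
    using h by (auto simp: insert_at_def nth_append)
next
  assume h: "w!t = x \<and> take t w @ drop (Suc t) w = a"
  then have "take t a = take t w" "drop t a = drop (Suc t) w" using assms by auto
  then show "insert_at t x a = w" using h assms unfolding insert_at_def
    by (metis id_take_nth_drop)
qed

lemma sum_atMost_length_insert_at:
  fixes g :: "nat \<Rightarrow> 'k::field"
  assumes "\<And>t. insert_at t x a \<noteq> w \<Longrightarrow> g t = 0"
  shows "(\<Sum>t\<in>{..length a}. g t) = (\<Sum>t\<in>{..<length w}. g t)"
proof (cases "length w = Suc (length a)")
  case True
  then show ?thesis by (simp add: lessThan_Suc_atMost)
next
  case False
  then have "insert_at t x a \<noteq> w" for t by (auto simp: insert_at_def)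
  then show ?thesis using assms by simp
qed

lemma sh_coef_insert_at_letter:
  assumes "t < length w" "insert_at t x a = w"
  shows "sh_coef P w ({0..<length w} - {t}) = inverse (p_right P x (drop t a))"
proof -
  have compl: "{0..<length w} - ({0..<length w} - {t}) = {t}" using assms(1) by auto
  have "sh_coef P w ({0..<length w} - {t}) =
      (\<Prod>i\<in>{0..<length w} - {t}. if t < i then inverse (P (w!t) (w!i)) else 1)"
    unfolding sh_coef_def compl by simp
  also have "\<dots> = (\<Prod>i\<in>{Suc t..<length w}. inverse (P x (w!i)))"
    using assms by (subst prod.inter_filter[symmetric])
      (auto intro!: prod.cong simp: insert_at_eq_iff)
  also have "\<dots> = prod_list (map (\<lambda>y. inverse (P x y)) (drop (Suc t) w))"
    by (simp add: prod_list_map_drop)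
  also have "drop (Suc t) w = drop t a"
    using assms by (auto simp: insert_at_eq_iff)
  finally show ?thesis by (simp add: p_right_def prod_list_map_inverse)
qed

lemma sh_coef_letter_insert_at:
  assumes "t < length w" "insert_at t x a = w"
  shows "sh_coef P w {t} = inverse (p_left P x (take t a))"
proof -
  have "sh_coef P w {t} = (\<Prod>i\<in>{0..<length w} - {t}. if i < t then inverse (P (w!i) (w!t)) else 1)"
    by (simp add: sh_coef_def)
  also have "\<dots> = (\<Prod>i\<in>{0..<t}. inverse (P (w!i) x))"
    using assms by (subst prod.inter_filter[symmetric])
      (auto intro!: prod.cong simp: insert_at_eq_iff)
  also have "\<dots> = prod_list (map (\<lambda>y. inverse (P y x)) (take t w))"
    using assms(1) by (simp add: prod_list_map_take min_def)
  also have "take t w = take t a"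
    using assms by (auto simp: insert_at_eq_iff)
  finally show ?thesis by (simp add: p_left_def prod_list_map_inverse)
qed

text \<open>The argument \<open>p\<close> accumulates the part of the word already passed, so \<open>c p s\<close> is the coefficient
  of inserting \<open>x\<close> between \<open>p\<close> and \<open>s\<close>.\<close>
fun ins_sum :: "(nat list \<Rightarrow> nat list \<Rightarrow> 'k::field) \<Rightarrow> nat \<Rightarrow> nat list \<Rightarrow> nat list \<Rightarrow> 'k sh" where
  "ins_sum c x p [] = sh_scale (c p []) (comon (p @ [x]))"
| "ins_sum c x p (y # ys) =
     sh_add (sh_scale (c p (y # ys)) (comon (p @ x # y # ys))) (ins_sum c x (p @ [y]) ys)"

lemma ins_sum_eq:
  "ins_sum c x p a =
     (\<lambda>w. \<Sum>t\<in>{..length a}. if p @ insert_at t x a = w then c (p @ take t a) (drop t a) else 0)"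
proof (induction a arbitrary: p)
  case Nil then show ?case by (auto simp: sh_scale_def comon_def insert_at_def)
next
  case (Cons y ys)
  show ?case
    by (simp only: ins_sum.simps Cons.IH length_Cons sum.atMost_Suc_shift)
      (auto simp: sh_scale_def sh_add_def comon_def insert_at_def fun_eq_iff intro!: sum.cong)
qed

lemma sh_mult_comon_letter:
  "sh_mult P (comon a) (comon [x]) = ins_sum (\<lambda>p s. inverse (p_right P x s)) x [] a"
proof
  fix w :: "nat list"
  define U where "U = {0..<length w}"
  define h where "h S = comon a (nths w S) * comon [x] (nths w (U - S)) * sh_coef P w S" for S
  define c where "c t = (if insert_at t x a = w then inverse (p_right P x (drop t a)) else 0)" for t
  have "sh_mult P (comon a) (comon [x]) w = (\<Sum>S\<in>Pow U. h S)"
    by (simp add: sh_mult_def h_def U_def)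
  also have "\<dots> = (\<Sum>t\<in>U. h (U - {t}))"
  proof (rule sum_Pow_cosingletons)
    fix S assume "S \<subseteq> U" "h S \<noteq> 0"
    then have "length (nths w (U - S)) = 1" by (auto simp: h_def comon_def split: if_splits)
    then show "card (U - S) = 1" by (subst (asm) length_nths_subset) (auto simp: U_def)
  qed (simp add: U_def)
  also have "\<dots> = (\<Sum>t\<in>{..<length w}. c t)"
  proof (rule sum.cong)
    fix t assume "t \<in> {..<length w}"
    then have t: "t < length w" by simp
    have compl: "U - (U - {t}) = {t}" using t by (auto simp: U_def)
    have rest: "nths w (U - {t}) = take t w @ drop (Suc t) w"
      using t by (simp add: U_def nths_atLeast0_lessThan_minus_singleton)
    show "h (U - {t}) = c t"
      unfolding h_def compl rest c_def
      using t insert_at_eq_iff[OF t] sh_coef_insert_at_letter[OF t, of x a P]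
      by (auto simp: U_def comon_def nths_singleton_index)
  qed (simp add: U_def atLeast0LessThan)
  also have "\<dots> = (\<Sum>t\<in>{..length a}. c t)"
    by (rule sum_atMost_length_insert_at[of x a w, symmetric]) (simp add: c_def)
  also have "\<dots> = ins_sum (\<lambda>p s. inverse (p_right P x s)) x [] a w"
    by (simp add: ins_sum_eq c_def)
  finally show "sh_mult P (comon a) (comon [x]) w = ins_sum (\<lambda>p s. inverse (p_right P x s)) x [] a w" .
qed

lemma sh_mult_letter_comon:
  "sh_mult P (comon [x]) (comon a) = ins_sum (\<lambda>p s. inverse (p_left P x p)) x [] a"
proof
  fix w :: "nat list"
  define U where "U = {0..<length w}"
  define h where "h S = comon [x] (nths w S) * comon a (nths w (U - S)) * sh_coef P w S" for S
  define c where "c t = (if insert_at t x a = w then inverse (p_left P x (take t a)) else 0)" for t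
  have "sh_mult P (comon [x]) (comon a) w = (\<Sum>S\<in>Pow U. h S)"
    by (simp add: sh_mult_def h_def U_def)
  also have "\<dots> = (\<Sum>t\<in>U. h {t})"
  proof (rule sum_Pow_singletons)
    fix S assume "S \<subseteq> U" "h S \<noteq> 0"
    then show "card S = 1"
      by (auto simp: h_def comon_def U_def length_nths_subset[symmetric] split: if_splits)
  qed (simp add: U_def)
  also have "\<dots> = (\<Sum>t\<in>{..<length w}. c t)"
  proof (rule sum.cong)
    fix t assume "t \<in> {..<length w}"
    then have t: "t < length w" by simp
    have rest: "nths w (U - {t}) = take t w @ drop (Suc t) w"
      using t by (simp add: U_def nths_atLeast0_lessThan_minus_singleton)
    show "h {t} = c t"
      unfolding h_def rest c_def
      using t insert_at_eq_iff[OF t] sh_coef_letter_insert_at[OF t, of x a P]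
      by (auto simp: comon_def nths_singleton_index)
  qed (simp add: U_def atLeast0LessThan)
  also have "\<dots> = (\<Sum>t\<in>{..length a}. c t)"
    by (rule sum_atMost_length_insert_at[of x a w, symmetric]) (simp add: c_def)
  also have "\<dots> = ins_sum (\<lambda>p s. inverse (p_left P x p)) x [] a w"
    unfolding ins_sum_eq c_def by (intro sum.cong refl) simp
  finally show "sh_mult P (comon [x]) (comon a) w = ins_sum (\<lambda>p s. inverse (p_left P x p)) x [] a w" .
qed

abbreviation sh_zero :: "'k::field sh" where "sh_zero \<equiv> (\<lambda>_. 0)"

lemma sh_add_zero[simp]: "sh_add f sh_zero = f" "sh_add sh_zero f = f"
  by (auto simp: sh_add_def)
lemma sh_scale_zero[simp]: "sh_scale 0 f = sh_zero" "sh_scale c sh_zero = sh_zero"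
  by (auto simp: sh_scale_def)
lemma sh_add_scale_merge:
  "sh_add (sh_scale c1 f) (sh_add (sh_scale c2 f) g) = sh_add (sh_scale (c1+c2) f) g"
  "sh_add (sh_scale c1 f) (sh_scale c2 f) = sh_scale (c1+c2) f"
  by (auto simp: sh_add_def sh_scale_def fun_eq_iff algebra_simps)
lemma sh_scale_scale[simp]: "sh_scale a (sh_scale b f) = sh_scale (a*b) f"
  by (auto simp: sh_scale_def)
lemma sh_scale_one[simp]: "sh_scale 1 f = f"
  by (simp add: sh_scale_def)

lemma sh_mult_scale_left: "sh_mult P (sh_scale c f) g = sh_scale c (sh_mult P f g)"
  by (auto simp: sh_mult_def sh_scale_def fun_eq_iff sum_distrib_left algebra_simps)
lemma sh_mult_scale_right: "sh_mult P f (sh_scale c g) = sh_scale c (sh_mult P f g)"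
  by (auto simp: sh_mult_def sh_scale_def fun_eq_iff sum_distrib_left algebra_simps)
lemma sh_mult_add_left: "sh_mult P (sh_add f g) h = sh_add (sh_mult P f h) (sh_mult P g h)"
  by (auto simp: sh_mult_def sh_add_def fun_eq_iff sum.distrib algebra_simps)
lemma sh_mult_add_right: "sh_mult P f (sh_add g h) = sh_add (sh_mult P f g) (sh_mult P f h)"
  by (auto simp: sh_mult_def sh_add_def fun_eq_iff sum.distrib algebra_simps)

lemmas sh_mult_linear = sh_mult_scale_left sh_mult_scale_right sh_mult_add_left sh_mult_add_right

text \<open>\<open>c = 1\<close> gives the skew bracket \<open>sh_br\<close>, and \<open>c = q\<^sup>-\<^sup>1\<close> the bracket in the definition of \<open>e[k,\<phi>(k)]\<close>.\<close>
definition sh_qbr :: "(nat \<Rightarrow> nat \<Rightarrow> 'k::field) \<Rightarrow> 'k \<Rightarrow> nat list \<Rightarrow> nat list \<Rightarrow> 'k sh \<Rightarrow> 'k sh \<Rightarrow> 'k sh" where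
  "sh_qbr P c u v A B = sh_add (sh_mult P A B) (sh_scale (- c * pw P u v) (sh_mult P B A))"

lemma sh_br_eq_sh_qbr: "sh_br P u v A B = sh_qbr P 1 u v A B"
  by (simp add: sh_br_def sh_qbr_def)

lemma sh_qbr_scale_left: "sh_qbr P c u v (sh_scale a A) B = sh_scale a (sh_qbr P c u v A B)"
  by (simp add: sh_qbr_def sh_mult_linear) (auto simp: sh_add_def sh_scale_def fun_eq_iff algebra_simps)

lemma sh_qbr_scale_right: "sh_qbr P c u v A (sh_scale a B) = sh_scale a (sh_qbr P c u v A B)"
  by (simp add: sh_qbr_def sh_mult_linear) (auto simp: sh_add_def sh_scale_def fun_eq_iff algebra_simps)

definition sh_comb :: "'k::field \<Rightarrow> 'k \<Rightarrow> nat list \<Rightarrow> nat list \<Rightarrow> 'k sh" where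
  "sh_comb a b w w' = sh_scale a (sh_add (comon w) (sh_scale b (comon w')))"

lemma sh_qbr_sh_comb_left:
  "sh_qbr P c u v (sh_comb a b w w') B =
   sh_scale a (sh_add (sh_qbr P c u v (comon w) B) (sh_scale b (sh_qbr P c u v (comon w') B)))"
  by (simp add: sh_comb_def sh_qbr_def sh_mult_linear)
    (auto simp: sh_add_def sh_scale_def fun_eq_iff algebra_simps)

lemma sh_qbr_sh_comb_right:
  "sh_qbr P c u v A (sh_comb a b w w') =
   sh_scale a (sh_add (sh_qbr P c u v A (comon w)) (sh_scale b (sh_qbr P c u v A (comon w'))))"
  by (simp add: sh_comb_def sh_qbr_def sh_mult_linear)
    (auto simp: sh_add_def sh_scale_def fun_eq_iff algebra_simps)

lemma sh_comb_eqI: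
  "a * c\<^sub>1 = a' \<Longrightarrow> a * c\<^sub>2 = a' * b \<Longrightarrow>
   sh_scale a (sh_add (sh_scale c\<^sub>1 (comon w)) (sh_scale c\<^sub>2 (comon w'))) = sh_comb a' b w w'"
  by (auto simp: sh_comb_def sh_scale_def sh_add_def fun_eq_iff algebra_simps)

lemma sh_comb_eqI_swap:
  "a * c\<^sub>1 = a' \<Longrightarrow> a * c\<^sub>2 = a' * b \<Longrightarrow>
   sh_scale a (sh_add (sh_scale c\<^sub>2 (comon w')) (sh_scale c\<^sub>1 (comon w))) = sh_comb a' b w w'"
  by (auto simp: sh_comb_def sh_scale_def sh_add_def fun_eq_iff algebra_simps)

lemma ins_sum_cong:
  "(\<And>t. t \<le> length a \<Longrightarrow> c1 (p @ take t a) (drop t a) = c2 (p @ take t a) (drop t a))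
   \<Longrightarrow> ins_sum c1 x p a = ins_sum c2 x p a"
proof (induction a arbitrary: p)
  case Nil
  then show ?case using Nil[of 0] by simp
next
  case (Cons y ys)
  have "ins_sum c1 x (p @ [y]) ys = ins_sum c2 x (p @ [y]) ys"
    using Cons.prems[of "Suc _"] by (intro Cons.IH) auto
  then show ?case using Cons.prems[of 0] by simp
qed

lemma ins_sum_add_scale:
  "sh_add (ins_sum c\<^sub>1 x p a) (sh_scale k (ins_sum c\<^sub>2 x p a)) =
   ins_sum (\<lambda>p s. c\<^sub>1 p s + k * c\<^sub>2 p s) x p a"
  by (induction a arbitrary: p) (auto simp: sh_add_def sh_scale_def fun_eq_iff algebra_simps)

lemma ins_sum_skip:
  "(\<And>i. i < length u \<Longrightarrow> c (p @ take i u) (drop i u @ v) = 0)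
   \<Longrightarrow> ins_sum c x p (u @ v) = ins_sum c x (p @ u) v"
proof (induction u arbitrary: p)
  case Nil then show ?case by simp
next
  case (Cons y ys)
  have "ins_sum c x (p @ [y]) (ys @ v) = ins_sum c x ((p @ [y]) @ ys) v"
    using Cons.prems[of "Suc _"] by (intro Cons.IH) auto
  then show ?case using Cons.prems[of 0] by simp
qed

lemma ins_sum_zero:
  "(\<And>i. i \<le> length v \<Longrightarrow> c (p @ take i v) (drop i v) = 0) \<Longrightarrow> ins_sum c x p v = sh_zero"
proof -
  assume h: "\<And>i. i \<le> length v \<Longrightarrow> c (p @ take i v) (drop i v) = 0"
  have "ins_sum c x p (v @ []) = ins_sum c x (p @ v) []"
    using h by (intro ins_sum_skip) auto
  then show ?thesis using h[of "length v"] by simp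
qed

lemma ins_sum_last:
  "(\<And>i. i < length v \<Longrightarrow> c (p @ take i v) (drop i v) = 0)
   \<Longrightarrow> ins_sum c x p v = sh_scale (c (p @ v) []) (comon (p @ v @ [x]))"
proof -
  assume h: "\<And>i. i < length v \<Longrightarrow> c (p @ take i v) (drop i v) = 0"
  have "ins_sum c x p (v @ []) = ins_sum c x (p @ v) []"
    using h by (intro ins_sum_skip) auto
  then show ?thesis by simp
qed

lemma ins_sum_pair:
  "ins_sum c x p (x # y # w) = sh_add (sh_scale (c p (x#y#w) + c (p@[x]) (y#w)) (comon (p @ x # x # y # w)))
      (ins_sum c x (p @ [x, y]) w)"
  by (simp add: sh_add_scale_merge(1)[symmetric])

lemma ins_sum_pair_end:
  "ins_sum c x p [x] = sh_scale (c p [x] + c (p@[x]) []) (comon (p @ [x, x]))"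
  by (simp add: sh_add_scale_merge(2)[symmetric])

section \<open>Brackets of a comonomial with a letter\<close>

definition left_coef :: "(nat \<Rightarrow> nat \<Rightarrow> 'k::field) \<Rightarrow> 'k \<Rightarrow> nat \<Rightarrow> nat list \<Rightarrow> nat list \<Rightarrow> 'k" where
  "left_coef P c x p s = p_left P x s * (inverse (p_both P x s) - c)"

definition right_coef :: "(nat \<Rightarrow> nat \<Rightarrow> 'k::field) \<Rightarrow> nat \<Rightarrow> nat list \<Rightarrow> nat list \<Rightarrow> 'k" where
  "right_coef P x p s = p_right P x p * (inverse (p_both P x p) - 1)"

lemma sh_qbr_comon_letter:
  assumes "p_left P x u = p_left P x a" and "p_left P x a \<noteq> 0"
  shows "sh_qbr P c u [x] (comon a) (comon [x]) = ins_sum (left_coef P c x) x [] a"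
proof -
  have "sh_qbr P c u [x] (comon a) (comon [x]) =
      ins_sum (\<lambda>p s. inverse (p_right P x s) - c * p_left P x u * inverse (p_left P x p)) x [] a"
    by (simp add: sh_qbr_def sh_mult_comon_letter sh_mult_letter_comon ins_sum_add_scale
        pw_letter_right algebra_simps)
  also have "\<dots> = ins_sum (left_coef P c x) x [] a"
  proof (rule ins_sum_cong)
    fix t
    have "p_left P x a = p_left P x (take t a) * p_left P x (drop t a)"
      by (metis append_take_drop_id p_left_simps(3))
    then show "inverse (p_right P x (drop t a)) - c * p_left P x u * inverse (p_left P x ([] @ take t a))
        = left_coef P c x ([] @ take t a) (drop t a)"
      using assms by (simp add: left_coef_def p_both_eq field_simps)
  qed
  finally show ?thesis .
qed

lemma sh_qbr_letter_comon:
  assumes "p_right P x u = p_right P x a" and "p_right P x a \<noteq> 0"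
  shows "sh_qbr P 1 [x] u (comon [x]) (comon a) = ins_sum (right_coef P x) x [] a"
proof -
  have "sh_qbr P 1 [x] u (comon [x]) (comon a) =
      ins_sum (\<lambda>p s. inverse (p_left P x p) - p_right P x u * inverse (p_right P x s)) x [] a"
    by (simp add: sh_qbr_def sh_mult_comon_letter sh_mult_letter_comon ins_sum_add_scale
        pw_letter_left algebra_simps)
  also have "\<dots> = ins_sum (right_coef P x) x [] a"
  proof (rule ins_sum_cong)
    fix t
    have "p_right P x a = p_right P x (take t a) * p_right P x (drop t a)"
      by (metis append_take_drop_id p_right_simps(3))
    then show "inverse (p_left P x ([] @ take t a)) - p_right P x u * inverse (p_right P x (drop t a))
        = right_coef P x ([] @ take t a) (drop t a)"
      using assms by (simp add: right_coef_def p_both_eq field_simps)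
  qed
  finally show ?thesis .
qed

lemma sh_qbr_scale_comon_letter:
  assumes "p_left P x u = p_left P x w" and "p_left P x w \<noteq> 0"
    and "ins_sum (left_coef P c x) x [] w = sh_scale d (comon (x # w))"
  shows "sh_qbr P c u [x] (sh_scale a (comon w)) (comon [x]) = sh_scale (a * d) (comon (x # w))"
  using assms by (simp add: sh_qbr_scale_left sh_qbr_comon_letter)

lemma sh_qbr_sh_comb_comon_letter:
  assumes "p_left P x u = p_left P x w" and "p_left P x w' = p_left P x w" and "p_left P x w \<noteq> 0"
    and "ins_sum (left_coef P c x) x [] w = sh_scale d (comon (x # w))"
    and "ins_sum (left_coef P c x) x [] w' = sh_scale d (comon (x # w'))"
  shows "sh_qbr P c u [x] (sh_comb a b w w') (comon [x]) = sh_comb (a * d) b (x # w) (x # w')"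
  using assms by (simp add: sh_qbr_sh_comb_left sh_qbr_comon_letter)
    (auto simp: sh_comb_def sh_add_def sh_scale_def fun_eq_iff algebra_simps)

lemma sh_qbr_letter_scale_comon:
  assumes "p_right P x u = p_right P x w" and "p_right P x w \<noteq> 0"
    and "ins_sum (right_coef P x) x [] w = sh_scale d (comon (w @ [x]))"
  shows "sh_qbr P 1 [x] u (comon [x]) (sh_scale a (comon w)) = sh_scale (a * d) (comon (w @ [x]))"
  using assms by (simp add: sh_qbr_scale_right sh_qbr_letter_comon)

lemma sh_qbr_letter_sh_comb_comon:
  assumes "p_right P x u = p_right P x w" and "p_right P x w' = p_right P x w" and "p_right P x w \<noteq> 0"
    and "ins_sum (right_coef P x) x [] w = sh_scale d (comon (w @ [x]))"
    and "ins_sum (right_coef P x) x [] w' = sh_scale d (comon (w' @ [x]))"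
  shows "sh_qbr P 1 [x] u (comon [x]) (sh_comb a b w w') = sh_comb (a * d) b (w @ [x]) (w' @ [x])"
  using assms by (simp add: sh_qbr_sh_comb_right sh_qbr_letter_comon)
    (auto simp: sh_comb_def sh_add_def sh_scale_def fun_eq_iff algebra_simps)

text \<open>The factor \<open>p_both P x s\<close> collects \<open>q\<^sup>-\<^sup>1\<close> for every letter of \<open>s\<close> connected to \<open>x\<close> and \<open>q\<^sup>2\<close>
  for every occurrence of \<open>x\<close>, so \<open>left_coef P 1 x\<close> and \<open>right_coef P x\<close> vanish wherever these
  contributions balance. The two insertions next to an existing letter \<open>x\<close> produce the same word and
  their coefficients cancel, so in each word below only the displayed insertions survive.\<close>

lemma ins_sum_left_coef_conn:
  assumes q: "q \<noteq> 0" and conn_z: "P x z * P z x = inverse q" and disc_v: "disconnected P x v0"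
  shows "ins_sum (left_coef P 1 x) x [] (z # v0) = sh_scale (p_left P x (z # v0) * (q - 1)) (comon (x # z # v0))"
proof -
  let ?c = "left_coef P 1 x"
  have both_v: "p_both P x v0 = 1" using disc_v by (rule disconnected_p_both)
  have tail: "ins_sum ?c x [z] v0 = sh_zero"
  proof (rule ins_sum_zero)
    fix i assume "i \<le> length v0"
    show "?c ([z] @ take i v0) (drop i v0) = 0"
      using disconnected_p_both[OF disconnected_drop[OF disc_v]] by (simp add: left_coef_def)
  qed
  show ?thesis using tail both_v q conn_z by (simp add: left_coef_def, (simp add: field_simps)?)
qed

lemma ins_sum_right_coef_conn:
  assumes q: "q \<noteq> 0" and conn_z: "P x z * P z x = inverse q" and disc_v: "disconnected P x v0"
  shows "ins_sum (right_coef P x) x [] (v0 @ [z]) = sh_scale (p_right P x (v0 @ [z]) * (q - 1)) (comon (v0 @ [z, x]))"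
proof -
  let ?c = "right_coef P x"
  have both_v: "\<And>i. p_both P x (take i v0) = 1" using disc_v by (intro disconnected_p_both disconnected_take)
  have both: "p_both P x v0 = 1" using disc_v by (rule disconnected_p_both)
  have skip_prefix: "ins_sum ?c x [] (v0 @ [z]) = ins_sum ?c x ([] @ v0) [z]"
  proof (rule ins_sum_skip)
    fix i assume "i < length v0"
    show "?c ([] @ take i v0) (drop i v0 @ [z]) = 0"
      using both_v by (simp add: right_coef_def)
  qed
  show ?thesis unfolding skip_prefix using both q conn_z by (simp add: right_coef_def, (simp add: field_simps)?)
qed

lemma ins_sum_left_coef_disc_conn:
  assumes q: "q \<noteq> 0" and disc_y: "P x y * P y x = 1" and conn_z: "P x z * P z x = inverse q" and disc_v: "disconnected P x v0"
  shows "ins_sum (left_coef P 1 x) x [] (y # z # v0) =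
         sh_add (sh_scale (p_left P x (y # z # v0) * (q - 1)) (comon (x # y # z # v0)))
                (sh_scale (p_left P x (z # v0) * (q - 1)) (comon (y # x # z # v0)))"
proof -
  let ?c = "left_coef P 1 x"
  have both_v: "p_both P x v0 = 1" using disc_v by (rule disconnected_p_both)
  have tail: "ins_sum ?c x [y, z] v0 = sh_zero"
  proof (rule ins_sum_zero)
    fix i assume "i \<le> length v0"
    show "?c ([y, z] @ take i v0) (drop i v0) = 0"
      using disconnected_p_both[OF disconnected_drop[OF disc_v]] by (simp add: left_coef_def)
  qed
  show ?thesis using tail both_v q disc_y conn_z by (simp add: left_coef_def, (simp add: field_simps)?)
qed

lemma ins_sum_right_coef_conn_disc:
  assumes q: "q \<noteq> 0" and disc_y: "P x y * P y x = 1" and conn_z: "P x z * P z x = inverse q" and disc_v: "disconnected P x v0"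
  shows "ins_sum (right_coef P x) x [] (v0 @ [z, y]) =
         sh_add (sh_scale (p_right P x (v0 @ [z]) * (q - 1)) (comon (v0 @ [z, x, y])))
                (sh_scale (p_right P x (v0 @ [z, y]) * (q - 1)) (comon (v0 @ [z, y, x])))"
proof -
  let ?c = "right_coef P x"
  have both_v: "\<And>i. p_both P x (take i v0) = 1" using disc_v by (intro disconnected_p_both disconnected_take)
  have both: "p_both P x v0 = 1" using disc_v by (rule disconnected_p_both)
  have skip_prefix: "ins_sum ?c x [] (v0 @ [z, y]) = ins_sum ?c x ([] @ v0) [z, y]"
  proof (rule ins_sum_skip)
    fix i assume "i < length v0"
    show "?c ([] @ take i v0) (drop i v0 @ [z, y]) = 0"
      using both_v by (simp add: right_coef_def)
  qed
  show ?thesis unfolding skip_prefix using both q disc_y conn_z by (simp add: right_coef_def, (simp add: field_simps)?)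
qed

lemma ins_sum_qleft_coef_disc:
  assumes q: "q \<noteq> 0" and disc_y: "P x y * P y x = 1"
  shows "ins_sum (left_coef P (inverse q) x) x [] [y] =
         sh_add (sh_scale (P y x * (1 - inverse q)) (comon [x, y])) (sh_scale (1 - inverse q) (comon [y, x]))"
  using q disc_y by (simp add: left_coef_def, (simp add: field_simps)?)

lemma ins_sum_left_coef_cancel:
  assumes q: "q \<noteq> 0" and diag: "P x x = q" and conn_y1: "P x y1 * P y1 x = inverse q" and conn_y2: "P x y2 * P y2 x = inverse q"
    and conn_z: "P x z * P z x = inverse q" and disc_u: "disconnected P x u0" and disc_v: "disconnected P x v0"
  shows "ins_sum (left_coef P 1 x) x [] (y1 # u0 @ y2 # x # z # v0) =
         sh_scale (p_left P x (y1 # u0 @ y2 # x # z # v0) * (q - 1)) (comon (x # y1 # u0 @ y2 # x # z # v0))"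
proof -
  let ?c = "left_coef P 1 x"
  have both_v: "p_both P x v0 = 1" using disc_v by (rule disconnected_p_both)
  have both_u: "\<And>i. p_both P x (drop i u0) = 1" using disc_u by (intro disconnected_p_both disconnected_drop)
  have skip_prefix: "ins_sum ?c x [y1] ((u0 @ [y2]) @ (x # z # v0)) = ins_sum ?c x ([y1] @ (u0 @ [y2])) (x # z # v0)"
  proof (rule ins_sum_skip)
    fix i assume "i < length (u0 @ [y2])"
    then have "drop i (u0 @ [y2]) = drop i u0 @ [y2]" by simp
    then show "?c ([y1] @ take i (u0 @ [y2])) (drop i (u0 @ [y2]) @ x # z # v0) = 0"
      using both_u both_v q diag conn_y2 conn_z by (simp add: left_coef_def, (simp add: field_simps)?)
  qed
  have tail: "ins_sum ?c x ([y1] @ u0 @ [y2] @ [x, z]) v0 = sh_zero"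
  proof (rule ins_sum_zero)
    fix i assume "i \<le> length v0"
    show "?c (([y1] @ u0 @ [y2] @ [x, z]) @ take i v0) (drop i v0) = 0"
      using disconnected_p_both[OF disconnected_drop[OF disc_v]] by (simp add: left_coef_def)
  qed
  have adjacent_cancel: "?c ([y1] @ u0 @ [y2]) (x # z # v0) + ?c (([y1] @ u0 @ [y2]) @ [x]) (z # v0) = 0"
    using both_v q diag conn_z by (simp add: left_coef_def, (simp add: field_simps)?)
  have "ins_sum ?c x [] (y1 # u0 @ y2 # x # z # v0) =
        sh_add (sh_scale (?c [] (y1 # u0 @ y2 # x # z # v0)) (comon (x # y1 # u0 @ y2 # x # z # v0)))
          (ins_sum ?c x [y1] ((u0 @ [y2]) @ (x # z # v0)))" by simp
  also have "ins_sum ?c x [y1] ((u0 @ [y2]) @ (x # z # v0)) = sh_zero"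
    unfolding skip_prefix ins_sum_pair using tail adjacent_cancel by simp
  also have "?c [] (y1 # u0 @ y2 # x # z # v0) = p_left P x (y1 # u0 @ y2 # x # z # v0) * (q - 1)"
    using both_v both_u[of 0] q diag conn_y1 conn_y2 conn_z by (simp add: left_coef_def, (simp add: field_simps)?)
  finally show ?thesis by simp
qed

lemma ins_sum_right_coef_cancel:
  assumes q: "q \<noteq> 0" and diag: "P x x = q" and conn_y1: "P x y1 * P y1 x = inverse q" and conn_y2: "P x y2 * P y2 x = inverse q"
    and conn_z: "P x z * P z x = inverse q" and disc_u: "disconnected P x u0" and disc_v: "disconnected P x v0"
  shows "ins_sum (right_coef P x) x [] (v0 @ z # x # y2 # u0 @ [y1]) =
         sh_scale (p_right P x (v0 @ z # x # y2 # u0 @ [y1]) * (q - 1)) (comon (v0 @ z # x # y2 # u0 @ [y1, x]))"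
proof -
  let ?c = "right_coef P x"
  have both_v: "\<And>i. p_both P x (take i v0) = 1" using disc_v by (intro disconnected_p_both disconnected_take)
  have both_u: "\<And>i. p_both P x (take i u0) = 1" using disc_u by (intro disconnected_p_both disconnected_take)
  have both: "p_both P x v0 = 1" "p_both P x u0 = 1" using disc_v disc_u by (auto intro: disconnected_p_both)
  have skip_prefix: "ins_sum ?c x [] (v0 @ (z # x # y2 # u0 @ [y1])) = ins_sum ?c x ([] @ v0) (z # x # y2 # u0 @ [y1])"
  proof (rule ins_sum_skip)
    fix i assume "i < length v0"
    show "?c ([] @ take i v0) (drop i v0 @ z # x # y2 # u0 @ [y1]) = 0"
      using both_v by (simp add: right_coef_def)
  qed
  have tail: "ins_sum ?c x (v0 @ [z, x, y2]) (u0 @ [y1]) = sh_scale (?c ((v0 @ [z, x, y2]) @ u0 @ [y1]) []) (comon ((v0 @ [z, x, y2]) @ (u0 @ [y1]) @ [x]))"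
  proof (rule ins_sum_last)
    fix i assume "i < length (u0 @ [y1])"
    then have "take i (u0 @ [y1]) = take i u0" by simp
    then show "?c ((v0 @ [z, x, y2]) @ take i (u0 @ [y1])) (drop i (u0 @ [y1])) = 0"
      using both_u both q diag conn_y2 conn_z by (simp add: right_coef_def, (simp add: field_simps)?)
  qed
  have adjacent_cancel: "?c (v0 @ [z]) (x # y2 # u0 @ [y1]) + ?c ((v0 @ [z]) @ [x]) (y2 # u0 @ [y1]) = 0"
    using both q diag conn_z by (simp add: right_coef_def, (simp add: field_simps)?)
  have head_zero: "?c v0 (z # x # y2 # u0 @ [y1]) = 0" using both by (simp add: right_coef_def)
  have "ins_sum ?c x [] (v0 @ z # x # y2 # u0 @ [y1]) = ins_sum ?c x (v0 @ [z]) (x # y2 # u0 @ [y1])"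
    using skip_prefix head_zero by simp
  also have "\<dots> = sh_scale (?c ((v0 @ [z, x, y2]) @ u0 @ [y1]) []) (comon ((v0 @ [z, x, y2]) @ (u0 @ [y1]) @ [x]))"
    unfolding ins_sum_pair using tail adjacent_cancel by simp
  also have "?c ((v0 @ [z, x, y2]) @ u0 @ [y1]) [] = p_right P x (v0 @ z # x # y2 # u0 @ [y1]) * (q - 1)"
    using both q diag conn_y1 conn_y2 conn_z by (simp add: right_coef_def, (simp add: field_simps)?)
  finally show ?thesis by simp
qed

lemma ins_sum_qleft_coef_cancel:
  assumes q: "q \<noteq> 0" and diag: "P x x = q" and conn_y1: "P x y1 * P y1 x = inverse q" and conn_y2: "P x y2 * P y2 x = inverse q"
    and disc_u: "disconnected P x u0"
  shows "ins_sum (left_coef P (inverse q) x) x [] (y1 # u0 @ [y2, x]) =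
         sh_scale (p_left P x (y1 # u0 @ [y2, x]) * (1 - inverse q)) (comon (x # y1 # u0 @ [y2, x]))"
proof -
  let ?c = "left_coef P (inverse q) x"
  have both_u: "\<And>i. p_both P x (drop i u0) = 1" using disc_u by (intro disconnected_p_both disconnected_drop)
  have skip_prefix: "ins_sum ?c x [y1] ((u0 @ [y2]) @ [x]) = ins_sum ?c x ([y1] @ (u0 @ [y2])) [x]"
  proof (rule ins_sum_skip)
    fix i assume "i < length (u0 @ [y2])"
    then have "drop i (u0 @ [y2]) = drop i u0 @ [y2]" by simp
    then show "?c ([y1] @ take i (u0 @ [y2])) (drop i (u0 @ [y2]) @ [x]) = 0"
      using both_u q diag conn_y2 by (simp add: left_coef_def, (simp add: field_simps)?)
  qed
  have adjacent_cancel: "?c ([y1] @ u0 @ [y2]) [x] + ?c (([y1] @ u0 @ [y2]) @ [x]) [] = 0"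
    using q diag by (simp add: left_coef_def, (simp add: field_simps)?)
  have "ins_sum ?c x [] (y1 # u0 @ [y2, x]) =
        sh_add (sh_scale (?c [] (y1 # u0 @ [y2, x])) (comon (x # y1 # u0 @ [y2, x])))
          (ins_sum ?c x [y1] ((u0 @ [y2]) @ [x]))" by simp
  also have "ins_sum ?c x [y1] ((u0 @ [y2]) @ [x]) = sh_zero"
    unfolding skip_prefix ins_sum_pair_end using adjacent_cancel by simp
  also have "?c [] (y1 # u0 @ [y2, x]) = p_left P x (y1 # u0 @ [y2, x]) * (1 - inverse q)"
    using both_u[of 0] q diag conn_y1 conn_y2 by (simp add: left_coef_def, (simp add: field_simps)?)
  finally show ?thesis by simp
qed

lemma leftb_snoc: "u \<noteq> [] \<Longrightarrow> leftb P (u @ [x]) = sh_qbr P 1 u [x] (leftb P u) (comon [x])"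
  by (cases "rev u") (auto simp: leftb_def sh_br_eq_sh_qbr)

lemma leftb_singleton: "leftb P [x] = comon [x]"
  by (simp add: leftb_def)

lemma rightb_Cons: "u \<noteq> [] \<Longrightarrow> rightb P (x # u) = sh_qbr P 1 [x] u (comon [x]) (rightb P u)"
  by (cases u) (auto simp: sh_br_eq_sh_qbr)

lemma repl_Cons: "a \<noteq> n \<Longrightarrow> repl n (a # ys) = a # repl n ys"
  by (cases ys) auto

lemma repl_append_n: "\<forall>x\<in>set xs. x < n \<Longrightarrow> repl n (xs @ n # Suc n # ys) = xs @ (n - 1) # n # ys"
  by (induction xs) (auto simp: repl_Cons)

lemma map_ltr_upt: "n \<le> m \<Longrightarrow> m \<le> 2 * n \<Longrightarrow> map (ltr n) [Suc n..<Suc m] = rev [2*n - m..<n]"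
proof (induction m rule: dec_induct)
  case (step m)
  have "[2*n - Suc m..<n] = (2*n - Suc m) # [2*n - m..<n]"
    using step by (simp add: upt_conv_Cons Suc_diff_Suc)
  then show ?case using step by (simp add: ltr_def)
qed simp

text \<open>The Dynkin diagram of type \<open>D\<^sub>n\<close>: the chain \<open>1, \<dots>, n - 1\<close> with \<open>n\<close> attached to \<open>n - 2\<close>.
  The hypotheses \<open>so_params\<close> say \<open>p\<^sub>i\<^sub>j p\<^sub>j\<^sub>i = q\<^sup>-\<^sup>1\<close> along edges and \<open>1\<close> between other distinct vertices.\<close>
definition dynkin_edge :: "nat \<Rightarrow> nat \<Rightarrow> nat \<Rightarrow> bool" where
  "dynkin_edge n i j \<longleftrightarrow> (j = Suc i \<and> j < n) \<or> (i = Suc j \<and> i < n) \<or>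
     (i = n - 2 \<and> j = n) \<or> (j = n - 2 \<and> i = n)"

locale so_parameters =
  fixes n :: nat and q :: "'k::field" and P :: "nat \<Rightarrow> nat \<Rightarrow> 'k"
  assumes so_params: "so_params n q P"
begin

lemma n_ge_3: "3 \<le> n" and q_nonzero: "q \<noteq> 0"
  using so_params by (auto simp: so_params_def)

lemma P_nonzero: "1 \<le> i \<Longrightarrow> i \<le> n \<Longrightarrow> 1 \<le> j \<Longrightarrow> j \<le> n \<Longrightarrow> P i j \<noteq> 0"
  using so_params by (auto simp: so_params_def)

lemma P_diag: "1 \<le> i \<Longrightarrow> i \<le> n \<Longrightarrow> P i i = q"
  using so_params by (auto simp: so_params_def)

lemma P_connected:
  assumes "1 \<le> i" "1 \<le> j" "i \<le> n" "j \<le> n" "dynkin_edge n i j"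
  shows "P i j * P j i = inverse q"
proof -
  have chain: "\<And>i. 1 < i \<Longrightarrow> i < n \<Longrightarrow> P i (i - 1) * P (i - 1) i = inverse q"
    and fork: "P (n - 2) n * P n (n - 2) = inverse q"
    using so_params by (auto simp: so_params_def)
  show ?thesis using assms(5) unfolding dynkin_edge_def
  proof (elim disjE conjE)
    assume "j = Suc i" "j < n"
    then show ?thesis using chain[of j] assms by (simp add: mult.commute)
  next
    assume "i = Suc j" "i < n"
    then show ?thesis using chain[of i] assms by simp
  qed (use fork in \<open>simp_all add: mult.commute\<close>)
qed

lemma P_disconnected:
  assumes "1 \<le> i" "1 \<le> j" "i \<le> n" "j \<le> n" "i \<noteq> j" "\<not> dynkin_edge n i j"
  shows "P i j * P j i = 1"
proof -
  have last: "P (n - 1) n * P n (n - 1) = 1"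
    and other: "\<And>i j. 1 \<le> i \<Longrightarrow> i < j \<Longrightarrow> j \<le> n \<Longrightarrow> j > i + 1 \<Longrightarrow> (i, j) \<noteq> (n - 2, n)
      \<Longrightarrow> P i j * P j i = 1"
    using so_params by (auto simp: so_params_def)
  consider "i < j" | "j < i" using assms(5) by linarith
  then show ?thesis
  proof cases
    case 1
    show ?thesis
    proof (cases "j = Suc i")
      case True
      then have "j = n" "i = n - 1" using assms 1 by (auto simp: dynkin_edge_def)
      then show ?thesis using last by simp
    next
      case False
      then show ?thesis using other[of i j] assms 1 by (auto simp: dynkin_edge_def)
    qed
  next
    case 2
    show ?thesis
    proof (cases "i = Suc j")
      case True
      then have "i = n" "j = n - 1" using assms 2 by (auto simp: dynkin_edge_def)
      then show ?thesis using last by (simp add: mult.commute)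
    next
      case False
      then show ?thesis using other[of j i] assms 2 by (auto simp: dynkin_edge_def mult.commute)
    qed
  qed
qed

lemma P_n1_n_disconnected: "P (n - 1) n * P n (n - 1) = 1"
  using so_params by (simp add: so_params_def)

lemma p_left_nonzero_on_word: "set a \<subseteq> {1..n} \<Longrightarrow> 1 \<le> x \<Longrightarrow> x \<le> n \<Longrightarrow> p_left P x a \<noteq> 0"
  by (induction a) (auto simp: P_nonzero)

lemma p_right_nonzero_on_word: "set a \<subseteq> {1..n} \<Longrightarrow> 1 \<le> x \<Longrightarrow> x \<le> n \<Longrightarrow> p_right P x a \<noteq> 0"
  by (induction a) (auto simp: P_nonzero)

text \<open>\<open>eword k j\<close> and \<open>eword' k j\<close> are \<open>e(k, 2n - j)\<close> and \<open>e'(k, 2n - j)\<close> with every index \<open>i > n\<close>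
  replaced by \<open>2n - i\<close>, and \<open>alpha k j\<close> is \<open>\<alpha>\<^sub>k\<^sup>2\<^sup>n\<^sup>-\<^sup>j\<close> without the factor \<open>\<epsilon>\<close>.\<close>
definition eword :: "nat \<Rightarrow> nat \<Rightarrow> nat list" where
  "eword k j = [k..<n - 1] @ n # rev [j..<n]"

definition eword' :: "nat \<Rightarrow> nat \<Rightarrow> nat list" where
  "eword' k j = [k..<n - 1] @ (n - 1) # n # rev [j..<n - 1]"

definition alpha :: "nat \<Rightarrow> nat \<Rightarrow> 'k" where
  "alpha k j = (q - 1) ^ (2*n - j - k - 1) * pairs_p P (eword k j)"

lemma rev_eword: "rev (eword k j) = [j..<n] @ n # rev [k..<n - 1]"
  by (simp add: eword_def)

lemma rev_eword': "rev (eword' k j) = [j..<n - 1] @ n # (n - 1) # rev [k..<n - 1]"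
  by (simp add: eword'_def)

lemma upt_n_snoc: "j \<le> n - 1 \<Longrightarrow> [j..<n] = [j..<n - 1] @ [n - 1]"
proof -
  assume "j \<le> n - 1"
  moreover have "n = Suc (n - 1)" using n_ge_3 by simp
  ultimately show ?thesis by (metis upt_Suc_append)
qed

lemma rev_upt_last: "j \<le> n - 1 \<Longrightarrow> rev [j..<n] = (n - 1) # rev [j..<n - 1]"
  by (simp add: upt_n_snoc)

lemma p_left_eword': "j \<le> n - 1 \<Longrightarrow> p_left P x (eword' k j) = p_left P x (eword k j)"
  by (simp add: eword_def eword'_def rev_upt_last mult_ac)

lemma p_right_eword': "j \<le> n - 1 \<Longrightarrow> p_right P x (eword' k j) = p_right P x (eword k j)"
  by (simp add: eword_def eword'_def rev_upt_last mult_ac)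

lemma set_eword: "1 \<le> k \<Longrightarrow> 1 \<le> j \<Longrightarrow> set (eword k j) \<subseteq> {1..n} \<and> set (eword' k j) \<subseteq> {1..n}"
  using n_ge_3 by (auto simp: eword_def eword'_def)

lemma eword_snoc: "j < n \<Longrightarrow> eword k j = eword k (Suc j) @ [j]"
  by (simp add: eword_def upt_conv_Cons)

lemma eword'_snoc: "j < n - 1 \<Longrightarrow> eword' k j = eword' k (Suc j) @ [j]"
  by (simp add: eword'_def upt_conv_Cons)

lemma eword_Cons: "k < n - 1 \<Longrightarrow> eword k j = k # eword (Suc k) j"
  by (simp add: eword_def upt_conv_Cons)

lemma eword'_Cons: "k < n - 1 \<Longrightarrow> eword' k j = k # eword' (Suc k) j"
  by (simp add: eword'_def upt_conv_Cons)

lemma eword_n: "eword k n = [k..<n - 1] @ [n]"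
  by (simp add: eword_def)

lemma alpha_snoc:
  "k \<le> j \<Longrightarrow> j < n \<Longrightarrow> alpha k j = alpha k (Suc j) * (p_left P j (eword k (Suc j)) * (q - 1))"
  by (simp add: alpha_def eword_snoc pairs_p_snoc Suc_diff_Suc flip: power_Suc2)

lemma alpha_Cons:
  assumes "j \<le> k" "k < n - 1"
  shows "alpha k j = alpha (Suc k) j * (p_right P k (eword (Suc k) j) * (q - 1))"
proof -
  have "2*n - j - k - 1 = Suc (2*n - j - Suc k - 1)" using assms by arith
  then show ?thesis using assms by (simp add: alpha_def eword_Cons mult_ac)
qed

lemma elab_eq: "1 \<le> k \<Longrightarrow> k \<le> n - 1 \<Longrightarrow> n < m \<Longrightarrow> elab n k m = [k..<n - 1] @ n # [Suc n..<Suc m]"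
  by (auto simp: elab_def)

lemma ew_eq_eword:
  assumes "1 \<le> k" "k \<le> n - 1" "n < m" "m < 2 * n"
  shows "ew n k m = eword k (2*n - m)"
proof -
  have "map (ltr n) [k..<n - 1] = [k..<n - 1]" by (rule map_idI) (auto simp: ltr_def)
  moreover have "map (ltr n) [Suc n..<Suc m] = rev [2*n - m..<n]" using assms by (intro map_ltr_upt) auto
  ultimately show ?thesis using assms by (simp add: ew_def elab_eq eword_def ltr_def)
qed

lemma ew'_eq_eword':
  assumes a: "1 \<le> k" "k \<le> n - 1" "n < m" "m < 2 * n"
  shows "ew' n k m = eword' k (2*n - m)"
proof -
  have low: "map (ltr n) [k..<n - 1] = [k..<n - 1]" by (rule map_idI) (auto simp: ltr_def)
  have u: "[Suc n..<Suc m] = Suc n # [Suc (Suc n)..<Suc m]" using a by (simp add: upt_conv_Cons)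
  have "repl n ([k..<n - 1] @ n # [Suc n..<Suc m]) = [k..<n - 1] @ (n - 1) # n # [Suc (Suc n)..<Suc m]"
    unfolding u by (rule repl_append_n) auto
  moreover have "map (ltr n) [Suc (Suc n)..<Suc m] = rev [2*n - m..<n - 1]"
  proof -
    have "(n - 1) # map (ltr n) [Suc (Suc n)..<Suc m] = map (ltr n) [Suc n..<Suc m]"
      unfolding u using n_ge_3 by (simp add: ltr_def)
    also have "\<dots> = rev [2*n - m..<n]" using a by (intro map_ltr_upt) auto
    also have "\<dots> = (n - 1) # rev [2*n - m..<n - 1]" using a by (intro rev_upt_last) auto
    finally show ?thesis by simp
  qed
  ultimately show ?thesis using a low by (simp add: ew'_def elab_eq eword'_def ltr_def)
qed

lemma prod_pairs_eq_pairs_p_eword: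
  assumes a: "1 \<le> k" "k \<le> n - 1" "n < m" "m < 2 * n"
  shows "(\<Prod>(i, j)\<in>{(i, j). k \<le> i \<and> i < j \<and> j \<le> m \<and> i \<noteq> n - 1 \<and> j \<noteq> n - 1}.
      P (ltr n i) (ltr n j)) = pairs_p P (eword k (2*n - m))"
proof -
  have sorted: "sorted_wrt (<) (elab n k m)"
    using a by (auto simp: elab_eq sorted_wrt_append)
  have "{(i, j). k \<le> i \<and> i < j \<and> j \<le> m \<and> i \<noteq> n - 1 \<and> j \<noteq> n - 1} =
      {(i, j). i \<in> set (elab n k m) \<and> j \<in> set (elab n k m) \<and> i < j}"
    using a by (auto simp: elab_eq)
  then show ?thesis
    using prod_pairs_eq_pairs_p[OF sorted, of P "ltr n"] ew_eq_eword[OF a] by (simp add: ew_def)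
qed

section \<open>Left-normed brackets\<close>

lemma leftb_upt:
  "1 \<le> k \<Longrightarrow> k \<le> i \<Longrightarrow> i \<le> n - 2 \<Longrightarrow>
   leftb P [k..<Suc i] = sh_scale ((q - 1) ^ (i - k) * pairs_p P [k..<Suc i]) (comon (rev [k..<Suc i]))"
proof (induction i)
  case (Suc i)
  show ?case
  proof (cases "k = Suc i")
    case False
    then have i: "1 \<le> k" "k \<le> i" "i < n - 2" using Suc.prems by auto
    have "rev [k..<Suc i] = i # rev [k..<i]" using i by simp
    then have collapse: "ins_sum (left_coef P 1 (Suc i)) (Suc i) [] (rev [k..<Suc i]) =
        sh_scale (p_left P (Suc i) (rev [k..<Suc i]) * (q - 1)) (comon (Suc i # rev [k..<Suc i]))"
      using i n_ge_3 q_nonzero by (simp only:) (intro ins_sum_left_coef_conn;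
          auto simp: disconnected_def dynkin_edge_def intro!: P_connected P_disconnected)
    have IH: "leftb P [k..<Suc i] =
        sh_scale ((q - 1) ^ (i - k) * pairs_p P [k..<Suc i]) (comon (rev [k..<Suc i]))"
      using Suc.IH i by simp
    have "leftb P [k..<Suc (Suc i)] = sh_qbr P 1 [k..<Suc i] [Suc i] (leftb P [k..<Suc i]) (comon [Suc i])"
      using leftb_snoc[of "[k..<Suc i]" P "Suc i"] i by simp
    also have "\<dots> = sh_scale ((q - 1) ^ (i - k) * pairs_p P [k..<Suc i] *
        (p_left P (Suc i) (rev [k..<Suc i]) * (q - 1))) (comon (Suc i # rev [k..<Suc i]))"
      unfolding IH
    proof (rule sh_qbr_scale_comon_letter[OF _ _ collapse])
      show "p_left P (Suc i) (rev [k..<Suc i]) \<noteq> 0"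
        using i n_ge_3 by (intro p_left_nonzero_on_word) auto
    qed simp
    also have "\<dots> = sh_scale ((q - 1) ^ (Suc i - k) * pairs_p P [k..<Suc (Suc i)])
        (comon (rev [k..<Suc (Suc i)]))"
    proof -
      have "[k..<Suc (Suc i)] = [k..<Suc i] @ [Suc i]" "Suc i - k = Suc (i - k)" using i by auto
      then show ?thesis by (simp only: pairs_p_snoc rev_snoc p_left_simps(4)) (simp add: mult_ac)
    qed
    finally show ?thesis .
  qed (simp add: leftb_singleton)
qed simp

lemma leftb_eword_n:
  assumes k: "1 \<le> k" "k \<le> n - 2"
  shows "leftb P (eword k n) = sh_scale (alpha k n) (comon (rev (eword k n)))"
proof -
  have n: "n - 1 = Suc (n - 2)" using n_ge_3 by simp
  have upt: "[k..<n - 1] = [k..<Suc (n - 2)]" "rev [k..<n - 1] = (n - 2) # rev [k..<n - 2]"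
    unfolding n using k by simp_all
  have collapse: "ins_sum (left_coef P 1 n) n [] (rev [k..<n - 1]) =
      sh_scale (p_left P n (rev [k..<n - 1]) * (q - 1)) (comon (n # rev [k..<n - 1]))"
    unfolding upt(2) using k n_ge_3 q_nonzero
    by (intro ins_sum_left_coef_conn)
      (auto simp: disconnected_def dynkin_edge_def intro!: P_connected P_disconnected)
  have "leftb P (eword k n) = sh_qbr P 1 [k..<n - 1] [n] (leftb P [k..<n - 1]) (comon [n])"
    unfolding eword_n using k n_ge_3 by (intro leftb_snoc) auto
  also have "\<dots> = sh_scale ((q - 1) ^ (n - 2 - k) * pairs_p P [k..<n - 1] *
      (p_left P n (rev [k..<n - 1]) * (q - 1))) (comon (n # rev [k..<n - 1]))"
    unfolding upt(1) leftb_upt[OF k(1) k(2) order_refl] unfolding upt(1)[symmetric]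
  proof (rule sh_qbr_scale_comon_letter[OF _ _ collapse])
    show "p_left P n (rev [k..<n - 1]) \<noteq> 0"
      using k n_ge_3 by (intro p_left_nonzero_on_word) auto
  qed simp
  also have "\<dots> = sh_scale (alpha k n) (comon (rev (eword k n)))"
  proof -
    have "2*n - n - k - 1 = Suc (n - 2 - k)" using k n_ge_3 by simp
    then show ?thesis by (simp add: alpha_def eword_n pairs_p_snoc mult_ac)
  qed
  finally show ?thesis .
qed

lemma ins_sum_left_coef_rev_eword_n:
  assumes k: "1 \<le> k" "k \<le> n - 2"
  shows "ins_sum (left_coef P 1 (n - 1)) (n - 1) [] (rev (eword k n)) =
    sh_add (sh_scale (p_left P (n - 1) (n # rev [k..<n - 1]) * (q - 1)) (comon ((n - 1) # n # rev [k..<n - 1])))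
      (sh_scale (p_left P (n - 1) (rev [k..<n - 1]) * (q - 1)) (comon (n # (n - 1) # rev [k..<n - 1])))"
proof -
  have n: "n - 1 = Suc (n - 2)" using n_ge_3 by simp
  have tail: "rev [k..<n - 1] = (n - 2) # rev [k..<n - 2]"
    unfolding n using k by simp
  show ?thesis
    unfolding eword_n rev_snoc tail using k n_ge_3 q_nonzero P_n1_n_disconnected
    by (intro ins_sum_left_coef_disc_conn)
      (auto simp: disconnected_def dynkin_edge_def intro!: P_connected P_disconnected)
qed

lemma leftb_eword_base:
  assumes k: "1 \<le> k" "k \<le> n - 2"
  shows "leftb P (eword k (n - 1)) =
    sh_comb (alpha k (n - 1)) (P (n - 1) n) (rev (eword k (n - 1))) (rev (eword' k (n - 1)))"
proof -
  have words: "eword k (n - 1) = eword k n @ [n - 1]"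
      "rev (eword' k (n - 1)) = n # (n - 1) # rev [k..<n - 1]"
    using n_ge_3 by (simp_all add: eword_snoc eword'_def)
  have "leftb P (eword k (n - 1)) =
      sh_qbr P 1 (eword k n) [n - 1] (leftb P (eword k n)) (comon [n - 1])"
    unfolding words by (intro leftb_snoc) (simp add: eword_n)
  also have "\<dots> = sh_scale (alpha k n) (ins_sum (left_coef P 1 (n - 1)) (n - 1) [] (rev (eword k n)))"
  proof -
    have "p_left P (n - 1) (rev (eword k n)) \<noteq> 0"
      using k n_ge_3 set_eword[of k n] by (intro p_left_nonzero_on_word) auto
    then show ?thesis unfolding leftb_eword_n[OF k] sh_qbr_scale_left
      by (subst sh_qbr_comon_letter) simp_all
  qed
  also have "\<dots> = sh_comb (alpha k (n - 1)) (P (n - 1) n) (rev (eword k (n - 1))) (rev (eword' k (n - 1)))"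
    unfolding ins_sum_left_coef_rev_eword_n[OF k] unfolding words eword_n rev_snoc
  proof (rule sh_comb_eqI)
    show "alpha k n * (p_left P (n - 1) (n # rev [k..<n - 1]) * (q - 1)) = alpha k (n - 1)"
      using k n_ge_3 by (simp add: alpha_snoc eword_n)
    have "alpha k (n - 1) * P (n - 1) n =
        alpha k n * (p_left P (n - 1) (rev [k..<n - 1]) * (q - 1)) * (P n (n - 1) * P (n - 1) n)"
      using k n_ge_3 by (simp add: alpha_snoc eword_n mult_ac)
    also have "P n (n - 1) * P (n - 1) n = 1"
      using P_n1_n_disconnected by (simp add: mult.commute)
    finally show "alpha k n * (p_left P (n - 1) (rev [k..<n - 1]) * (q - 1)) = alpha k (n - 1) * P (n - 1) n"
      by simp
  qed
  finally show ?thesis .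
qed

text \<open>Read backwards, \<open>e(k, 2n - x - 1)\<close> starts with a Dynkin neighbour of \<open>x\<close> and reaches \<open>x\<close> right after
  another neighbour, passing only letters disconnected from \<open>x\<close> in between; this is what makes all
  but one insertion of \<open>x\<close> cancel.\<close>
lemma rev_eword_left_shape:
  assumes k: "1 \<le> k" "k \<le> x" and x: "Suc x \<le> n - 1"
  obtains y\<^sub>1 y\<^sub>2 u u' where
    "rev (eword k (Suc x)) = y\<^sub>1 # u @ y\<^sub>2 # x # rev [k..<x]"
    "rev (eword' k (Suc x)) = y\<^sub>2 # u' @ y\<^sub>1 # x # rev [k..<x]"
    "P x y\<^sub>1 * P y\<^sub>1 x = inverse q" "P x y\<^sub>2 * P y\<^sub>2 x = inverse q"
    "disconnected P x u" "disconnected P x u'"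
proof (cases "Suc x = n - 1")
  case True
  then have n: "n = Suc (Suc x)" using n_ge_3 by simp
  show ?thesis
  proof (rule that[where y\<^sub>1 = "Suc x" and y\<^sub>2 = n and u = "[]" and u' = "[]"])
    have upt: "[Suc x..<n] = [Suc x]" "[Suc x..<n - 1] = []" "[k..<n - 1] = [k..<x] @ [x]"
      using k n by simp_all
    show "rev (eword k (Suc x)) = Suc x # [] @ n # x # rev [k..<x]"
      "rev (eword' k (Suc x)) = n # [] @ Suc x # x # rev [k..<x]"
      unfolding rev_eword rev_eword' upt using True by simp_all
  qed (use k n in \<open>auto simp: dynkin_edge_def intro!: P_connected\<close>)
next
  case False
  then have x: "Suc x < n - 1" using x by simp
  have "[k..<n - 1] = [k..<x] @ [x..<n - 1]" using k x by (intro upt_split_at) auto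
  also have "[x..<n - 1] = x # Suc x # [Suc (Suc x)..<n - 1]" using x by (simp add: upt_conv_Cons)
  finally have "[k..<n - 1] = [k..<x] @ x # Suc x # [Suc (Suc x)..<n - 1]" .
  then have tail: "rev [k..<n - 1] = rev [Suc (Suc x)..<n - 1] @ Suc x # x # rev [k..<x]" by simp
  show ?thesis
  proof (rule that[where y\<^sub>1 = "Suc x" and y\<^sub>2 = "Suc x"
        and u = "[Suc (Suc x)..<n] @ n # rev [Suc (Suc x)..<n - 1]"
        and u' = "[Suc (Suc x)..<n - 1] @ n # (n - 1) # rev [Suc (Suc x)..<n - 1]"])
    show "rev (eword k (Suc x)) = Suc x # ([Suc (Suc x)..<n] @ n # rev [Suc (Suc x)..<n - 1]) @
        Suc x # x # rev [k..<x]"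
      "rev (eword' k (Suc x)) = Suc x # ([Suc (Suc x)..<n - 1] @ n # (n - 1) # rev [Suc (Suc x)..<n - 1]) @
        Suc x # x # rev [k..<x]"
      using x unfolding rev_eword rev_eword' tail by (simp_all add: upt_conv_Cons)
  qed (use k x in \<open>auto simp: disconnected_def dynkin_edge_def intro!: P_connected P_disconnected\<close>)
qed

lemma ins_sum_left_coef_rev_eword:
  assumes k: "1 \<le> k" "k < j" and j: "Suc j \<le> n - 1"
  shows "ins_sum (left_coef P 1 j) j [] (rev (eword k (Suc j))) =
      sh_scale (p_left P j (eword k (Suc j)) * (q - 1)) (comon (j # rev (eword k (Suc j))))"
    and "ins_sum (left_coef P 1 j) j [] (rev (eword' k (Suc j))) =
      sh_scale (p_left P j (eword k (Suc j)) * (q - 1)) (comon (j # rev (eword' k (Suc j))))"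
proof -
  obtain z where z: "j = Suc z" "k \<le> z" using k by (cases j) auto
  obtain y\<^sub>1 y\<^sub>2 u u' where shape:
    "rev (eword k (Suc j)) = y\<^sub>1 # u @ y\<^sub>2 # j # rev [k..<j]"
    "rev (eword' k (Suc j)) = y\<^sub>2 # u' @ y\<^sub>1 # j # rev [k..<j]"
    "P j y\<^sub>1 * P y\<^sub>1 j = inverse q" "P j y\<^sub>2 * P y\<^sub>2 j = inverse q"
    "disconnected P j u" "disconnected P j u'"
    by (rule rev_eword_left_shape[of k j]) (use k j in simp_all)
  have tail: "rev [k..<j] = z # rev [k..<z]" using z by simp
  have facts: "P j j = q" "P j z * P z j = inverse q" "disconnected P j (rev [k..<z])"
    using k j z n_ge_3
    by (auto simp: disconnected_def dynkin_edge_def intro!: P_diag P_connected P_disconnected)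
  have scalar: "p_left P j (eword k (Suc j)) = p_left P j (rev (eword k (Suc j)))"
      "p_left P j (eword k (Suc j)) = p_left P j (rev (eword' k (Suc j)))"
    using j by (simp_all add: p_left_eword')
  show "ins_sum (left_coef P 1 j) j [] (rev (eword k (Suc j))) =
      sh_scale (p_left P j (eword k (Suc j)) * (q - 1)) (comon (j # rev (eword k (Suc j))))"
    unfolding scalar(1) shape(1) tail
    by (rule ins_sum_left_coef_cancel) (use q_nonzero facts shape(3-6) in simp_all)
  show "ins_sum (left_coef P 1 j) j [] (rev (eword' k (Suc j))) =
      sh_scale (p_left P j (eword k (Suc j)) * (q - 1)) (comon (j # rev (eword' k (Suc j))))"
    unfolding scalar(2) shape(2) tail
    by (rule ins_sum_left_coef_cancel) (use q_nonzero facts shape(3-6) in simp_all)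
qed

lemma leftb_eword:
  "1 \<le> k \<Longrightarrow> k < j \<Longrightarrow> j \<le> n - 1 \<Longrightarrow>
   leftb P (eword k j) = sh_comb (alpha k j) (P (n - 1) n) (rev (eword k j)) (rev (eword' k j))"
proof (induction "n - 1 - j" arbitrary: j)
  case 0
  then have "j = n - 1" by simp
  then show ?case using leftb_eword_base[of k] 0 by simp
next
  case (Suc d)
  then have j: "1 \<le> k" "k < j" "Suc j \<le> n - 1" by auto
  have "eword k j = eword k (Suc j) @ [j]" using j by (intro eword_snoc) auto
  then have "leftb P (eword k j) = sh_qbr P 1 (eword k (Suc j)) [j] (leftb P (eword k (Suc j))) (comon [j])"
    by (simp only:) (rule leftb_snoc, simp add: eword_def)
  also have "\<dots> = sh_comb (alpha k (Suc j) * (p_left P j (eword k (Suc j)) * (q - 1))) (P (n - 1) n)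
      (j # rev (eword k (Suc j))) (j # rev (eword' k (Suc j)))"
  proof -
    have "leftb P (eword k (Suc j)) =
        sh_comb (alpha k (Suc j)) (P (n - 1) n) (rev (eword k (Suc j))) (rev (eword' k (Suc j)))"
      using Suc j by simp
    moreover have "p_left P j (rev (eword k (Suc j))) \<noteq> 0"
      using j set_eword[of k "Suc j"] by (intro p_left_nonzero_on_word) auto
    ultimately show ?thesis
      using j by (simp add: sh_qbr_sh_comb_comon_letter p_left_eword' ins_sum_left_coef_rev_eword)
  qed
  finally show ?case using j by (simp add: alpha_snoc eword_snoc eword'_snoc)
qed

section \<open>The bracket for \<open>m = \<phi>(k)\<close>\<close>

lemma ins_sum_qleft_coef_rev_eword:
  assumes k: "1 \<le> k" "k \<le> n - 2"
  shows "ins_sum (left_coef P (inverse q) k) k [] (rev (eword k (Suc k))) =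
      sh_scale (p_left P k (eword k (Suc k)) * (1 - inverse q)) (comon (k # rev (eword k (Suc k))))"
    and "ins_sum (left_coef P (inverse q) k) k [] (rev (eword' k (Suc k))) =
      sh_scale (p_left P k (eword k (Suc k)) * (1 - inverse q)) (comon (k # rev (eword' k (Suc k))))"
proof -
  obtain y\<^sub>1 y\<^sub>2 u u' where shape:
    "rev (eword k (Suc k)) = y\<^sub>1 # u @ y\<^sub>2 # k # rev [k..<k]"
    "rev (eword' k (Suc k)) = y\<^sub>2 # u' @ y\<^sub>1 # k # rev [k..<k]"
    "P k y\<^sub>1 * P y\<^sub>1 k = inverse q" "P k y\<^sub>2 * P y\<^sub>2 k = inverse q"
    "disconnected P k u" "disconnected P k u'"
    by (rule rev_eword_left_shape[of k k]) (use k n_ge_3 in simp_all)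
  have scalar: "p_left P k (eword k (Suc k)) = p_left P k (rev (eword k (Suc k)))"
      "p_left P k (eword k (Suc k)) = p_left P k (rev (eword' k (Suc k)))"
    using k by (simp_all add: p_left_eword')
  have diag: "P k k = q" using k by (intro P_diag) auto
  have empty: "rev [k..<k] = []" by simp
  show "ins_sum (left_coef P (inverse q) k) k [] (rev (eword k (Suc k))) =
      sh_scale (p_left P k (eword k (Suc k)) * (1 - inverse q)) (comon (k # rev (eword k (Suc k))))"
    unfolding scalar(1) shape(1) empty
    by (rule ins_sum_qleft_coef_cancel) (use q_nonzero diag shape(3-6) in simp_all)
  show "ins_sum (left_coef P (inverse q) k) k [] (rev (eword' k (Suc k))) =
      sh_scale (p_left P k (eword k (Suc k)) * (1 - inverse q)) (comon (k # rev (eword' k (Suc k))))"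
    unfolding scalar(2) shape(2) empty
    by (rule ins_sum_qleft_coef_cancel) (use q_nonzero diag shape(3-6) in simp_all)
qed

lemma sh_qbr_eword_mid:
  assumes k: "1 \<le> k" "k \<le> n - 2"
  shows "sh_qbr P (inverse q) (eword k (Suc k)) [k] (leftb P (eword k (Suc k))) (comon [k]) =
    sh_comb (inverse q * alpha k k) (P (n - 1) n) (rev (eword k k)) (rev (eword' k k))"
proof -
  have "p_left P k (rev (eword k (Suc k))) \<noteq> 0"
    using k set_eword[of k "Suc k"] by (intro p_left_nonzero_on_word) auto
  then have "sh_qbr P (inverse q) (eword k (Suc k)) [k] (leftb P (eword k (Suc k))) (comon [k]) =
      sh_comb (alpha k (Suc k) * (p_left P k (eword k (Suc k)) * (1 - inverse q))) (P (n - 1) n)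
        (k # rev (eword k (Suc k))) (k # rev (eword' k (Suc k)))"
    using k by (simp add: leftb_eword sh_qbr_sh_comb_comon_letter p_left_eword' ins_sum_qleft_coef_rev_eword)
  also have "\<dots> = sh_comb (inverse q * alpha k k) (P (n - 1) n) (rev (eword k k)) (rev (eword' k k))"
    using k q_nonzero by (simp add: alpha_snoc eword_snoc eword'_snoc field_simps)
  finally show ?thesis .
qed

lemma sh_qbr_eword_mid_last:
  "sh_qbr P (inverse q) [n] [n - 1] (comon [n]) (comon [n - 1]) =
   sh_comb (inverse q * alpha (n - 1) (n - 1)) (P (n - 1) n)
     (rev (eword (n - 1) (n - 1))) (rev (eword' (n - 1) (n - 1)))"
proof -
  have words: "eword (n - 1) (n - 1) = [n, n - 1]" "eword' (n - 1) (n - 1) = [n - 1, n]"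
    using rev_upt_last[of "n - 1"] by (simp_all add: eword_def eword'_def)
  have "sh_qbr P (inverse q) [n] [n - 1] (comon [n]) (comon [n - 1]) =
      ins_sum (left_coef P (inverse q) (n - 1)) (n - 1) [] [n]"
    using n_ge_3 by (intro sh_qbr_comon_letter p_left_nonzero_on_word) auto
  also have "\<dots> = sh_add (sh_scale (P n (n - 1) * (1 - inverse q)) (comon [n - 1, n]))
      (sh_scale (1 - inverse q) (comon [n, n - 1]))"
    using q_nonzero P_n1_n_disconnected by (intro ins_sum_qleft_coef_disc) (auto simp: mult.commute)
  also have "\<dots> = sh_comb (inverse q * alpha (n - 1) (n - 1)) (P (n - 1) n)
      (rev (eword (n - 1) (n - 1))) (rev (eword' (n - 1) (n - 1)))"
  proof -
    have alpha: "alpha (n - 1) (n - 1) = (q - 1) * P n (n - 1)"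
      using n_ge_3 unfolding alpha_def words by simp
    have "inverse q * ((q - 1) * P n (n - 1)) * P (n - 1) n = inverse q * (q - 1) * (P n (n - 1) * P (n - 1) n)"
      by (simp add: mult_ac)
    also have "P n (n - 1) * P (n - 1) n = 1" using P_n1_n_disconnected by (simp add: mult.commute)
    finally have key: "inverse q * ((q - 1) * P n (n - 1)) * P (n - 1) n = 1 - inverse q"
      using q_nonzero by (simp add: field_simps)
    have "sh_scale 1 (sh_add (sh_scale (P n (n - 1) * (1 - inverse q)) (comon [n - 1, n]))
        (sh_scale (1 - inverse q) (comon [n, n - 1]))) =
      sh_comb (inverse q * ((q - 1) * P n (n - 1))) (P (n - 1) n) [n - 1, n] [n, n - 1]"
      by (rule sh_comb_eqI) (use key q_nonzero in \<open>simp_all add: field_simps\<close>)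
    then show ?thesis unfolding words alpha by simp
  qed
  finally show ?thesis .
qed

section \<open>Right-normed brackets\<close>

lemma rightb_rev_upt:
  "1 \<le> j \<Longrightarrow> j \<le> i \<Longrightarrow> i \<le> n - 1 \<Longrightarrow>
   rightb P (rev [j..<Suc i]) = sh_scale ((q - 1) ^ (i - j) * pairs_p P (rev [j..<Suc i])) (comon [j..<Suc i])"
proof (induction i)
  case (Suc i)
  show ?case
  proof (cases "j = Suc i")
    case False
    then have i: "1 \<le> j" "j \<le> i" "i < n - 1" using Suc.prems by auto
    have "[j..<Suc i] = [j..<i] @ [i]" using i by simp
    then have collapse: "ins_sum (right_coef P (Suc i)) (Suc i) [] [j..<Suc i] =
        sh_scale (p_right P (Suc i) [j..<Suc i] * (q - 1)) (comon ([j..<Suc i] @ [Suc i]))"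
      using i n_ge_3 q_nonzero by (simp only: append_assoc append_Cons append_Nil)
        (intro ins_sum_right_coef_conn;
          auto simp: disconnected_def dynkin_edge_def intro!: P_connected P_disconnected)
    have IH: "rightb P (rev [j..<Suc i]) =
        sh_scale ((q - 1) ^ (i - j) * pairs_p P (rev [j..<Suc i])) (comon [j..<Suc i])"
      using Suc.IH i by simp
    have "rightb P (rev [j..<Suc (Suc i)]) =
        sh_qbr P 1 [Suc i] (rev [j..<Suc i]) (comon [Suc i]) (rightb P (rev [j..<Suc i]))"
      using rightb_Cons[of "rev [j..<Suc i]" P "Suc i"] i by simp
    also have "\<dots> = sh_scale ((q - 1) ^ (i - j) * pairs_p P (rev [j..<Suc i]) *
        (p_right P (Suc i) [j..<Suc i] * (q - 1))) (comon ([j..<Suc i] @ [Suc i]))"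
      unfolding IH
    proof (rule sh_qbr_letter_scale_comon[OF _ _ collapse])
      show "p_right P (Suc i) [j..<Suc i] \<noteq> 0"
        using i n_ge_3 by (intro p_right_nonzero_on_word) auto
    qed simp
    also have "\<dots> = sh_scale ((q - 1) ^ (Suc i - j) * pairs_p P (rev [j..<Suc (Suc i)]))
        (comon [j..<Suc (Suc i)])"
    proof -
      have "[j..<Suc (Suc i)] = [j..<Suc i] @ [Suc i]" "Suc i - j = Suc (i - j)" using i by auto
      then show ?thesis by (simp only: rev_snoc pairs_p.simps p_right_simps(4)) (simp add: mult_ac)
    qed
    finally show ?thesis .
  qed simp
qed simp

lemma ins_sum_right_coef_upt_n:
  assumes j: "1 \<le> j" "j \<le> n - 2"
  shows "ins_sum (right_coef P n) n [] [j..<n] =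
    sh_add (sh_scale (p_right P n [j..<n - 1] * (q - 1)) (comon ([j..<n - 1] @ [n, n - 1])))
      (sh_scale (p_right P n [j..<n] * (q - 1)) (comon ([j..<n] @ [n])))"
proof -
  have "n - 1 = Suc (n - 2)" using n_ge_3 by simp
  then have upt: "[j..<n] = [j..<n - 1] @ [n - 1]" "[j..<n - 1] = [j..<n - 2] @ [n - 2]"
    using j upt_n_snoc[of j] by (simp, metis upt_Suc_append)
  show ?thesis
    unfolding upt using j n_ge_3 q_nonzero P_n1_n_disconnected
    by (simp only: append_assoc append_Cons append_Nil, intro ins_sum_right_coef_conn_disc)
      (auto simp: mult.commute disconnected_def dynkin_edge_def intro!: P_connected P_disconnected)
qed

lemma rightb_eword_base:
  assumes j: "1 \<le> j" "j \<le> n - 2"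
  shows "rightb P (eword (n - 1) j) =
    sh_comb (alpha (n - 1) j) (P (n - 1) n) (rev (eword (n - 1) j)) (rev (eword' (n - 1) j))"
proof -
  have words: "eword (n - 1) j = n # rev [j..<n]" "rev (eword' (n - 1) j) = [j..<n - 1] @ [n, n - 1]"
    by (simp_all add: eword_def eword'_def)
  define a where "a = (q - 1) ^ (n - 1 - j) * pairs_p P (rev [j..<n])"
  have "rightb P (eword (n - 1) j) = sh_qbr P 1 [n] (rev [j..<n]) (comon [n]) (rightb P (rev [j..<n]))"
    unfolding words using j n_ge_3 by (intro rightb_Cons) simp
  also have "\<dots> = sh_scale a (ins_sum (right_coef P n) n [] [j..<n])"
  proof -
    have "n = Suc (n - 1)" using n_ge_3 by simp
    then have "rightb P (rev [j..<n]) = sh_scale a (comon [j..<n])"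
      using rightb_rev_upt[of j "n - 1"] j n_ge_3 by (simp add: a_def)
    moreover have "p_right P n [j..<n] \<noteq> 0" using j by (intro p_right_nonzero_on_word) auto
    ultimately show ?thesis by (simp add: sh_qbr_scale_right sh_qbr_letter_comon)
  qed
  also have "\<dots> = sh_comb (alpha (n - 1) j) (P (n - 1) n) (rev (eword (n - 1) j)) (rev (eword' (n - 1) j))"
    unfolding ins_sum_right_coef_upt_n[OF j] unfolding words rev.simps(2) rev_rev_ident
  proof (rule sh_comb_eqI_swap)
    have exp: "2*n - j - (n - 1) - 1 = Suc (n - 1 - j)" using j n_ge_3 by simp
    show alpha: "a * (p_right P n [j..<n] * (q - 1)) = alpha (n - 1) j"
      unfolding alpha_def words(1) a_def exp by (simp add: mult_ac)
    have "alpha (n - 1) j * P (n - 1) n =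
        a * (p_right P n [j..<n - 1] * (q - 1)) * (P n (n - 1) * P (n - 1) n)"
      unfolding alpha[symmetric] using j by (subst upt_n_snoc) (simp_all add: mult_ac)
    also have "P n (n - 1) * P (n - 1) n = 1" using P_n1_n_disconnected by (simp add: mult.commute)
    finally show "a * (p_right P n [j..<n - 1] * (q - 1)) = alpha (n - 1) j * P (n - 1) n"
      by simp
  qed
  finally show ?thesis .
qed

text \<open>The mirror image: read backwards, \<open>e(k + 1, 2n - j)\<close> continues after \<open>k\<close> with a neighbour of \<open>k\<close>
  and ends with another one.\<close>
lemma rev_eword_right_shape:
  assumes j: "1 \<le> j" "j \<le> k" and k: "k \<le> n - 2"
  obtains y\<^sub>1 y\<^sub>2 u u' where
    "rev (eword (Suc k) j) = [j..<k] @ k # y\<^sub>2 # u @ [y\<^sub>1]"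
    "rev (eword' (Suc k) j) = [j..<k] @ k # y\<^sub>1 # u' @ [y\<^sub>2]"
    "P k y\<^sub>1 * P y\<^sub>1 k = inverse q" "P k y\<^sub>2 * P y\<^sub>2 k = inverse q"
    "disconnected P k u" "disconnected P k u'"
proof -
  have upt: "[j..<m] = [j..<k] @ k # Suc k # [Suc (Suc k)..<m]" if "Suc (Suc k) \<le> m" for m
  proof -
    have "[j..<m] = [j..<k] @ [k..<m]" using j that by (intro upt_split_at) auto
    also have "[k..<m] = k # Suc k # [Suc (Suc k)..<m]" using that by (simp add: upt_conv_Cons)
    finally show ?thesis .
  qed
  consider "k = n - 2" | "k < n - 2" using k by linarith
  then show ?thesis
  proof cases
    case 1
    then have n: "n = Suc (Suc k)" using n_ge_3 by simp
    show ?thesis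
    proof (rule that[where y\<^sub>1 = n and y\<^sub>2 = "Suc k" and u = "[]" and u' = "[]"])
      have upt': "[j..<n] = [j..<k] @ [k, Suc k]" "[Suc k..<n - 1] = []" "[j..<n - 1] = [j..<k] @ [k]"
        using j n by simp_all
      show "rev (eword (Suc k) j) = [j..<k] @ k # Suc k # [] @ [n]"
        "rev (eword' (Suc k) j) = [j..<k] @ k # n # [] @ [Suc k]"
        unfolding rev_eword rev_eword' upt' using n by simp_all
    qed (use j n in \<open>auto simp: dynkin_edge_def intro!: P_connected\<close>)
  next
    case 2
    show ?thesis
    proof (rule that[where y\<^sub>1 = "Suc k" and y\<^sub>2 = "Suc k"
          and u = "[Suc (Suc k)..<n] @ n # rev [Suc (Suc k)..<n - 1]"
          and u' = "[Suc (Suc k)..<n - 1] @ n # (n - 1) # rev [Suc (Suc k)..<n - 1]"])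
      show "rev (eword (Suc k) j) = [j..<k] @ k # Suc k # ([Suc (Suc k)..<n] @ n # rev [Suc (Suc k)..<n - 1]) @ [Suc k]"
        "rev (eword' (Suc k) j) =
          [j..<k] @ k # Suc k # ([Suc (Suc k)..<n - 1] @ n # (n - 1) # rev [Suc (Suc k)..<n - 1]) @ [Suc k]"
        unfolding rev_eword rev_eword' using 2 upt[of n] upt[of "n - 1"] by (simp_all add: upt_conv_Cons)
    qed (use j 2 in \<open>auto simp: disconnected_def dynkin_edge_def intro!: P_connected P_disconnected\<close>)
  qed
qed

lemma ins_sum_right_coef_rev_eword:
  assumes j: "1 \<le> j" "j < k" and k: "k \<le> n - 2"
  shows "ins_sum (right_coef P k) k [] (rev (eword (Suc k) j)) =
      sh_scale (p_right P k (eword (Suc k) j) * (q - 1)) (comon (rev (eword (Suc k) j) @ [k]))"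
    and "ins_sum (right_coef P k) k [] (rev (eword' (Suc k) j)) =
      sh_scale (p_right P k (eword (Suc k) j) * (q - 1)) (comon (rev (eword' (Suc k) j) @ [k]))"
proof -
  obtain z where z: "k = Suc z" "j \<le> z" using j by (cases k) auto
  obtain y\<^sub>1 y\<^sub>2 u u' where shape:
    "rev (eword (Suc k) j) = [j..<k] @ k # y\<^sub>2 # u @ [y\<^sub>1]"
    "rev (eword' (Suc k) j) = [j..<k] @ k # y\<^sub>1 # u' @ [y\<^sub>2]"
    "P k y\<^sub>1 * P y\<^sub>1 k = inverse q" "P k y\<^sub>2 * P y\<^sub>2 k = inverse q"
    "disconnected P k u" "disconnected P k u'"
    by (rule rev_eword_right_shape[of j k]) (use j k in simp_all)
  have head: "[j..<k] = [j..<z] @ [z]" using z by simp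
  have facts: "P k k = q" "P k z * P z k = inverse q" "disconnected P k [j..<z]"
    using j k z n_ge_3
    by (auto simp: disconnected_def dynkin_edge_def intro!: P_diag P_connected P_disconnected)
  have scalar: "p_right P k (eword (Suc k) j) = p_right P k (rev (eword (Suc k) j))"
      "p_right P k (eword (Suc k) j) = p_right P k (rev (eword' (Suc k) j))"
    using j k by (simp_all add: p_right_eword')
  show "ins_sum (right_coef P k) k [] (rev (eword (Suc k) j)) =
      sh_scale (p_right P k (eword (Suc k) j) * (q - 1)) (comon (rev (eword (Suc k) j) @ [k]))"
    unfolding scalar(1) shape(1) head append_assoc append_Cons append_Nil
    by (rule ins_sum_right_coef_cancel) (use q_nonzero facts shape(3-6) in simp_all)
  show "ins_sum (right_coef P k) k [] (rev (eword' (Suc k) j)) =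
      sh_scale (p_right P k (eword (Suc k) j) * (q - 1)) (comon (rev (eword' (Suc k) j) @ [k]))"
    unfolding scalar(2) shape(2) head append_assoc append_Cons append_Nil
    by (rule ins_sum_right_coef_cancel) (use q_nonzero facts shape(3-6) in simp_all)
qed

lemma rightb_eword:
  "1 \<le> j \<Longrightarrow> j < k \<Longrightarrow> k \<le> n - 1 \<Longrightarrow>
   rightb P (eword k j) = sh_comb (alpha k j) (P (n - 1) n) (rev (eword k j)) (rev (eword' k j))"
proof (induction "n - 1 - k" arbitrary: k)
  case 0
  then have "k = n - 1" by simp
  then show ?case using rightb_eword_base[of j] 0 by simp
next
  case (Suc d)
  then have k: "1 \<le> j" "j < k" "k \<le> n - 2" by auto
  have "eword k j = k # eword (Suc k) j" using k by (intro eword_Cons) auto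
  then have "rightb P (eword k j) = sh_qbr P 1 [k] (eword (Suc k) j) (comon [k]) (rightb P (eword (Suc k) j))"
    by (simp only:) (rule rightb_Cons, simp add: eword_def)
  also have "\<dots> = sh_comb (alpha (Suc k) j * (p_right P k (eword (Suc k) j) * (q - 1))) (P (n - 1) n)
      (rev (eword (Suc k) j) @ [k]) (rev (eword' (Suc k) j) @ [k])"
  proof -
    have "rightb P (eword (Suc k) j) =
        sh_comb (alpha (Suc k) j) (P (n - 1) n) (rev (eword (Suc k) j)) (rev (eword' (Suc k) j))"
      using Suc k by simp
    moreover have "p_right P k (rev (eword (Suc k) j)) \<noteq> 0"
      using k set_eword[of "Suc k" j] by (intro p_right_nonzero_on_word) auto
    ultimately show ?thesis
      using k by (simp add: sh_qbr_letter_sh_comb_comon p_right_eword' ins_sum_right_coef_rev_eword)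
  qed
  finally show ?case using k by (simp add: alpha_Cons eword_Cons eword'_Cons)
qed

lemma ebr_eq_sh_comb:
  assumes k: "1 \<le> k" "k \<le> n - 1" and j: "1 \<le> j" "j \<le> n - 1"
  shows "ebr n q P k (2*n - j) =
    sh_comb ((if j = k then inverse q else 1) * alpha k j) (P (n - 1) n) (rev (eword k j)) (rev (eword' k j))"
proof -
  have ew: "ew n k (2*n - j) = eword k j" using k j by (subst ew_eq_eword) auto
  consider "k < j" | "j < k" | "j = k" by linarith
  then show ?thesis
  proof cases
    case 1
    then have "2*n - j < phi n k" using j by (simp add: phi_def)
    then show ?thesis using 1 k j by (simp add: ebr_def ew leftb_eword)
  next
    case 2
    then have "2*n - j > phi n k" using k by (simp add: phi_def)
    then show ?thesis using 2 k j by (simp add: ebr_def ew rightb_eword)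
  next
    case 3
    have "ltr n (2*n - k) = k" using k by (simp add: ltr_def)
    then have "ebr n q P k (2*n - j) =
        sh_qbr P (inverse q) (ew n k (2*n - k - 1)) [k] (leftb P (ew n k (2*n - k - 1))) (comon [k])"
      using 3 by (simp add: ebr_def phi_def sh_qbr_def Let_def)
    also have "\<dots> = sh_comb (inverse q * alpha k k) (P (n - 1) n) (rev (eword k k)) (rev (eword' k k))"
    proof (cases "k = n - 1")
      case True
      have "ew n k (2*n - k - 1) = [n]" using True n_ge_3 by (simp add: ew_def elab_def ltr_def)
      then show ?thesis using True sh_qbr_eword_mid_last by (simp add: leftb_singleton)
    next
      case False
      have "ew n k (2*n - k - 1) = eword k (Suc k)"
        using False k by (subst ew_eq_eword) (auto intro!: arg_cong[where f = "eword k"])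
      then show ?thesis using False k by (simp add: sh_qbr_eword_mid)
    qed
    finally show ?thesis using 3 by simp
  qed
qed

end

theorem proposition8p1:
  fixes q :: "'k::field" and P :: "nat \<Rightarrow> nat \<Rightarrow> 'k" and n k m :: nat
  assumes "so_params n q P"
    and "1 \<le> k" and "k < n" and "n < m" and "m < 2 * n"
  shows "ebr n q P k m =
    sh_scale ((if m = phi n k then inverse q else 1) * (q - 1) ^ (m - k - 1) *
              (\<Prod>(i, j)\<in>{(i, j). k \<le> i \<and> i < j \<and> j \<le> m \<and> i \<noteq> n - 1 \<and> j \<noteq> n - 1}.
                   P (ltr n i) (ltr n j)))
      (sh_add (comon (rev (ew n k m)))
              (sh_scale (P (n - 1) n) (comon (rev (ew' n k m)))))"
proof -
  interpret so_parameters n q P by standard (rule assms(1))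
  define j where "j = 2 * n - m"
  have km: "1 \<le> k" "k \<le> n - 1" "n < m" "m < 2 * n" using assms by auto
  have j: "1 \<le> j" "j \<le> n - 1" "m = 2 * n - j" using assms by (auto simp: j_def)
  have "m = phi n k \<longleftrightarrow> j = k" "m - k - 1 = 2*n - j - k - 1" using km j by (auto simp: phi_def)
  then show ?thesis
    using ebr_eq_sh_comb[OF km(1,2) j(1,2)]
    unfolding prod_pairs_eq_pairs_p_eword[OF km] ew_eq_eword[OF km] ew'_eq_eword'[OF km] sh_comb_def alpha_def
    by (simp add: j(3)[symmetric] j_def[symmetric] mult.assoc)
qed

end
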